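(* For any $\delta\in(0,1)$ there exists a constant $c(\delta)>0$ such that the following holds. Let $G=(V,E)$ be a simple graph on $n$ vertices with minimal degree at least $\delta n$. Then $\gamma(G)\ge c(\delta)\,\Phi(G)$.
   Context: Let $P$ be the transition matrix of the simple random walk on $G$ and $\pi(v)=\deg(v)/2|E|$ its stationary distribution. $P$ is self-adjoint on $L^2(\pi)$ with real eigenvalues $1=\lambda_1\ge\lambda_2\ge\dots\ge\lambda_n\ge -1$; the spectral gap is $\gamma(G)=1-\lambda_2$. For $S\subseteq V$, $\mathrm{Vol}(S)=\sum_{v\in S}\deg(v)$, $\partial S=\{(u,v)\in E: u\in S, v\notin S\}$, $\pi(S)=\sum_{v\in S}\pi(v)$, and the Cheeger constant is $\Phi(G)=\min_{S:\pi(S)\le 1/2}|\partial S|/\mathrm{Vol}(S)$. *)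

theory Defs
  imports "Jordan_Normal_Form.Char_Poly"
begin

definition simple_graph :: "nat \<Rightarrow> (nat \<Rightarrow> nat \<Rightarrow> bool) \<Rightarrow> bool" where
  "simple_graph n E \<longleftrightarrow> (\<forall>u v. E u v \<longrightarrow> E v u) \<and> (\<forall>u. \<not> E u u)
     \<and> (\<forall>u v. E u v \<longrightarrow> u < n \<and> v < n)"

definition gdeg :: "nat \<Rightarrow> (nat \<Rightarrow> nat \<Rightarrow> bool) \<Rightarrow> nat \<Rightarrow> nat" where
  "gdeg n E v = card {u. u < n \<and> E v u}"

definition walk_matrix :: "nat \<Rightarrow> (nat \<Rightarrow> nat \<Rightarrow> bool) \<Rightarrow> real mat" where
  "walk_matrix n E = mat n n (\<lambda>(i,j). if E i j then 1 / real (gdeg n E i) else 0)"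

definition eigenvalues_desc :: "real mat \<Rightarrow> real list" where
  "eigenvalues_desc M = rev (sorted_list_of_multiset (proots (char_poly M)))"

(* spectral gap 1 - lambda_2 *)
definition spectral_gap :: "nat \<Rightarrow> (nat \<Rightarrow> nat \<Rightarrow> bool) \<Rightarrow> real" where
  "spectral_gap n E = 1 - eigenvalues_desc (walk_matrix n E) ! 1"

definition gvol :: "nat \<Rightarrow> (nat \<Rightarrow> nat \<Rightarrow> bool) \<Rightarrow> nat set \<Rightarrow> nat" where
  "gvol n E S = (\<Sum>v\<in>S. gdeg n E v)"

definition gboundary :: "nat \<Rightarrow> (nat \<Rightarrow> nat \<Rightarrow> bool) \<Rightarrow> nat set \<Rightarrow> (nat \<times> nat) set" where
  "gboundary n E S = {(u,v). u \<in> S \<and> v < n \<and> v \<notin> S \<and> E u v}"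

definition stat_measure :: "nat \<Rightarrow> (nat \<Rightarrow> nat \<Rightarrow> bool) \<Rightarrow> nat set \<Rightarrow> real" where
  "stat_measure n E S = real (gvol n E S) / real (gvol n E {0..<n})"

definition cheeger :: "nat \<Rightarrow> (nat \<Rightarrow> nat \<Rightarrow> bool) \<Rightarrow> real" where
  "cheeger n E = Min {real (card (gboundary n E S)) / real (gvol n E S) | S.
      S \<subseteq> {0..<n} \<and> S \<noteq> {} \<and> stat_measure n E S \<le> 1/2}"

end

theory Submission
  imports Defs "HOL-Analysis.Analysis"
    "Jordan_Normal_Form.Jordan_Normal_Form_Existence"
    "Jordan_Normal_Form.Jordan_Normal_Form_Uniqueness"
begin

(* The walk matrix P is self-adjoint for the degree-weighted inner product, so its eigenvalues
   are real, and by the maximum principle they are at most 1.  If Phi > 0 no proper vertex set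
   is closed under taking neighbours, so P-harmonic functions are constant and, via the Jordan
   form, the eigenvalue 1 is simple.  Hence lambda_2 < 1 has a real eigenfunction orthogonal to
   the degrees; splitting it at a median gives f >= 0 whose support has stationary measure at
   most 1/2 and whose Dirichlet energy is at most 2 (1 - lambda_2) ||f||^2.

   As in the improved Cheeger inequality of Kwok, Lau, Lee, Oveis Gharan and Trevisan, f is
   then compared with a step function.  The range of f is cut greedily into intervals whose
   tent functions carry equal mass.  The tents are disjointly supported, and a tent of small
   energy has <b, A b> >= ||b||^2 / 2; when every degree is at least delta n, at most 4 / delta
   disjointly supported functions can do that.  So O(1/delta) levels T suffice to approximate f,
   and the co-area inequality applied to h = int_0^f dist(s, T) ds gives Phi <= O(1/delta) gamma.
*)

lemma sq_add_div_add_le: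
  fixes x y P Q :: real
  assumes "0 < P" "0 < Q"
  shows "(x + y)\<^sup>2 / (P + Q) \<le> x\<^sup>2 / P + y\<^sup>2 / Q"
proof -
  have "0 \<le> (x * Q - y * P)\<^sup>2" by simp
  then have "(x + y)\<^sup>2 * (P * Q) \<le> (x\<^sup>2 * Q + y\<^sup>2 * P) * (P + Q)"
    by (simp add: power2_eq_square algebra_simps)
  then show ?thesis using assms by (simp add: field_simps)
qed

lemma sq_diff_pos_part_add_neg_part_le:
  fixes a b :: real
  shows "(max 0 a - max 0 b)\<^sup>2 + (max 0 (-a) - max 0 (-b))\<^sup>2 \<le> (a - b)\<^sup>2"
  using mult_nonneg_nonpos[of a b] mult_nonneg_nonpos[of b a]
  by (auto simp: max_def power2_eq_square algebra_simps)

lemma ratio_le_of_sum_ratio_le: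
  fixes q1 q2 p1 p2 g :: real
  assumes sum: "q1 + q2 \<le> g * (p1 + p2)" and "0 < p1 + p2"
    and "0 \<le> q1" "0 \<le> q2" "0 \<le> p1" "0 \<le> p2"
  shows "(0 < p1 \<and> q1 \<le> g * p1) \<or> (0 < p2 \<and> q2 \<le> g * p2)"
proof (rule ccontr)
  assume neg: "\<not> ?thesis"
  have "g * p1 \<le> q1" "g * p2 \<le> q2"
    using neg assms(3-6) by (cases "p1 = 0"; cases "p2 = 0"; auto)+
  moreover have "g * p1 < q1 \<or> g * p2 < q2" using neg assms(2,5,6) by auto
  ultimately show False using sum by (auto simp: distrib_left)
qed

section \<open>Integrals of the distance to a finite set\<close>

lemma integrable_infdist: "(\<lambda>s::real. infdist s T) integrable_on {a..b}"
  by (intro integrable_continuous_real continuous_on_infdist continuous_on_id)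

lemma integral_infdist_combine:
  fixes T :: "real set"
  assumes "a \<le> c" "c \<le> b"
  shows "integral {a..c} (\<lambda>s. infdist s T) + integral {c..b} (\<lambda>s. infdist s T)
       = integral {a..b} (\<lambda>s. infdist s T)"
  using assms by (intro Henstock_Kurzweil_Integration.integral_combine integrable_infdist)

lemma integral_infdist_nonneg: "0 \<le> integral {a..b} (\<lambda>s::real. infdist s T)"
  by (intro integral_nonneg integrable_infdist) (simp add: infdist_nonneg)

lemma integral_infdist_le:
  fixes T :: "real set"
  assumes "b \<le> a"
  shows "integral {b..a} (\<lambda>s. infdist s T) \<le> (a - b) * (infdist a T + (a - b))"
proof -
  have "integral {b..a} (\<lambda>s. infdist s T) \<le> integral {b..a} (\<lambda>s. infdist a T + (a - b))"
  proof (intro integral_le integrable_infdist integrable_continuous_real continuous_intros)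
    fix s assume "s \<in> {b..a}"
    then have "dist s a \<le> a - b" by (auto simp: dist_real_def)
    then show "infdist s T \<le> infdist a T + (a - b)" using infdist_triangle[of s T a] by linarith
  qed
  also have "\<dots> = (a - b) * (infdist a T + (a - b))" using assms by (simp add: content_real)
  finally show ?thesis .
qed

lemma integral_infdist_ge_gap:
  fixes T :: "real set"
  assumes ne: "T \<noteq> {}" and "lo \<le> a" and gap: "T \<inter> {lo<..<a} = {}"
  shows "(a - lo)\<^sup>2 / 8 \<le> integral {lo..a} (\<lambda>s. infdist s T)"
proof -
  define l where "l = a - lo"
  let ?p = "lo + l / 4" and ?q = "a - l / 4"
  have "l / 4 \<le> infdist s T" if s: "s \<in> {?p..?q}" for s
    unfolding infdist_notempty[OF ne]
  proof (rule cINF_greatest[OF ne])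
    fix t assume "t \<in> T"
    then have "t \<le> lo \<or> a \<le> t" using gap by auto
    then show "l / 4 \<le> dist s t" using s unfolding dist_real_def l_def by (smt (verit) atLeastAtMost_iff)
  qed
  then have "integral {?p..?q} (\<lambda>s. l / 4) \<le> integral {?p..?q} (\<lambda>s. infdist s T)"
    by (intro integral_le integrable_infdist integrable_continuous_real continuous_intros)
  moreover have "integral {?p..?q} (\<lambda>s. l / 4) = l\<^sup>2 / 8"
    using assms(2) by (simp add: content_real l_def power2_eq_square field_simps)
  moreover have "integral {?p..?q} (\<lambda>s. infdist s T) \<le> integral {lo..a} (\<lambda>s. infdist s T)"
    using assms(2) integral_infdist_combine[of lo ?p a T] integral_infdist_combine[of ?p ?q a T]
      integral_infdist_nonneg[of lo ?p T] integral_infdist_nonneg[of ?q a T]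
    by (simp add: l_def field_simps)
  ultimately show ?thesis unfolding l_def by linarith
qed

lemma integral_infdist_ge_interval:
  fixes T :: "real set"
  assumes fin: "finite T" and ne: "T \<noteq> {}" and "lo \<le> a"
  shows "(a - lo)\<^sup>2 / (8 * (real (card (T \<inter> {lo<..<a})) + 1))
           \<le> integral {lo..a} (\<lambda>s. infdist s T)"
  using assms(3)
proof (induction "card (T \<inter> {lo<..<a})" arbitrary: lo a rule: less_induct)
  case (less lo a)
  show ?case
  proof (cases "T \<inter> {lo<..<a} = {}")
    case True
    then show ?thesis using integral_infdist_ge_gap[OF ne less.prems True] by simp
  next
    case False
    then obtain t where t: "t \<in> T" "lo < t" "t < a" by auto
    define c1 where "c1 = card (T \<inter> {lo<..<t})"
    define c2 where "c2 = card (T \<inter> {t<..<a})"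
    have "insert t ((T \<inter> {lo<..<t}) \<union> (T \<inter> {t<..<a})) \<subseteq> T \<inter> {lo<..<a}" using t by auto
    then have "card (insert t ((T \<inter> {lo<..<t}) \<union> (T \<inter> {t<..<a}))) \<le> card (T \<inter> {lo<..<a})"
      using fin by (intro card_mono) auto
    moreover have "(T \<inter> {lo<..<t}) \<inter> (T \<inter> {t<..<a}) = {}" by auto
    then have "card (insert t ((T \<inter> {lo<..<t}) \<union> (T \<inter> {t<..<a}))) = Suc (c1 + c2)"
      unfolding c1_def c2_def using fin by (subst card_insert_disjoint) (auto simp: card_Un_disjoint)
    ultimately have c12: "c1 + c2 + 1 \<le> card (T \<inter> {lo<..<a})" by simp
    have i1: "(t - lo)\<^sup>2 / (8 * (real c1 + 1)) \<le> integral {lo..t} (\<lambda>s. infdist s T)"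
      using less.hyps[of lo t] c12 t unfolding c1_def by auto
    have i2: "(a - t)\<^sup>2 / (8 * (real c2 + 1)) \<le> integral {t..a} (\<lambda>s. infdist s T)"
      using less.hyps[of t a] c12 t unfolding c2_def by auto
    have "(a - lo)\<^sup>2 / (8 * (real (card (T \<inter> {lo<..<a})) + 1))
        \<le> (a - lo)\<^sup>2 / (8 * (real c1 + 1) + 8 * (real c2 + 1))"
      using c12 by (intro divide_left_mono) auto
    also have "\<dots> \<le> (t - lo)\<^sup>2 / (8 * (real c1 + 1)) + (a - t)\<^sup>2 / (8 * (real c2 + 1))"
      using sq_add_div_add_le[of "8 * (real c1 + 1)" "8 * (real c2 + 1)" "t - lo" "a - t"] by simp
    also have "\<dots> \<le> integral {lo..a} (\<lambda>s. infdist s T)"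
      using i1 i2 integral_infdist_combine[of lo t a T] t by linarith
    finally show ?thesis .
  qed
qed

lemma sq_le_integral_infdist:
  fixes T :: "real set"
  assumes "finite T" "T \<noteq> {}" "0 \<le> a"
  shows "a\<^sup>2 \<le> 8 * (real (card T) + 1) * integral {0..a} (\<lambda>s. infdist s T)"
proof -
  have "card (T \<inter> {0<..<a}) \<le> card T" using assms(1) by (intro card_mono) auto
  then have "a\<^sup>2 / (8 * (real (card T) + 1)) \<le> (a - 0)\<^sup>2 / (8 * (real (card (T \<inter> {0<..<a})) + 1))"
    by (auto intro!: divide_left_mono)
  also have "\<dots> \<le> integral {0..a} (\<lambda>s. infdist s T)"
    using integral_infdist_ge_interval assms by blast
  finally show ?thesis by (simp add: pos_divide_le_eq mult.commute)
qed

lemma integral_infdist_diff_le: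
  fixes T :: "real set"
  assumes "0 \<le> a" "0 \<le> b"
  shows "max 0 (integral {0..a} (\<lambda>s. infdist s T) - integral {0..b} (\<lambda>s. infdist s T))
           \<le> 2 * (a - b)\<^sup>2 + (infdist a T)\<^sup>2 / 4"
proof (cases "b \<le> a")
  case True
  have "integral {0..a} (\<lambda>s. infdist s T) - integral {0..b} (\<lambda>s. infdist s T)
      = integral {b..a} (\<lambda>s. infdist s T)"
    using integral_infdist_combine[of 0 b a T] assms True by simp
  also have "\<dots> \<le> (a - b) * infdist a T + (a - b)\<^sup>2"
    using integral_infdist_le[OF True, of T] by (simp add: power2_eq_square algebra_simps)
  also have "\<dots> \<le> 2 * (a - b)\<^sup>2 + (infdist a T)\<^sup>2 / 4"
    using zero_le_power2[of "a - b - infdist a T / 2"] by (simp add: power2_eq_square algebra_simps)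
  finally show ?thesis by simp
next
  case False
  then have "integral {0..a} (\<lambda>s. infdist s T) \<le> integral {0..b} (\<lambda>s. infdist s T)"
    using integral_infdist_combine[of 0 a b T] integral_infdist_nonneg[of a b T] assms by simp
  then show ?thesis by simp
qed

section \<open>Tent functions along an increasing chain\<close>

definition tent :: "real \<Rightarrow> real \<Rightarrow> real \<Rightarrow> real" where
  "tent s t a = max 0 (min (a - s) (t - a))"

lemma tent_lipschitz: "\<bar>tent s t a - tent s t b\<bar> \<le> \<bar>a - b\<bar>"
  unfolding tent_def by (auto simp: max_def min_def abs_if)

lemma tent_nonzero_imp: "tent s t a \<noteq> 0 \<Longrightarrow> s < a \<and> a < t"
  unfolding tent_def by (auto simp: max_def min_def split: if_splits)

lemma tent_same [simp]: "tent s s a = 0"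
  unfolding tent_def by (auto simp: max_def min_def)

lemma tent_eq_min: "s \<le> a \<Longrightarrow> a \<le> t \<Longrightarrow> tent s t a = min (a - s) (t - a)"
  unfolding tent_def by auto

lemma chain_mono:
  fixes ts :: "nat \<Rightarrow> real"
  assumes "\<forall>i<j. ts i < ts (Suc i)" "i \<le> i'" "i' \<le> j"
  shows "ts i \<le> ts i'"
  using assms(2,3)
proof (induction i' rule: dec_induct)
  case (step m)
  then show ?case using assms(1) by (meson Suc_le_lessD less_imp_le order_trans)
qed simp

lemma tents_disjoint:
  fixes ts :: "nat \<Rightarrow> real"
  assumes inc: "\<forall>i<N. ts i < ts (Suc i)" and "i < N" "j < N" "i \<noteq> j"
  shows "tent (ts i) (ts (Suc i)) a = 0 \<or> tent (ts j) (ts (Suc j)) a = 0"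
proof (rule ccontr)
  assume "\<not> ?thesis"
  then have "ts i < a" "a < ts (Suc i)" "ts j < a" "a < ts (Suc j)"
    using tent_nonzero_imp by blast+
  moreover have "ts (Suc i) \<le> ts j \<or> ts (Suc j) \<le> ts i"
    using chain_mono[OF inc, of "Suc i" j] chain_mono[OF inc, of "Suc j" i] assms(2-4) by linarith
  ultimately show False by linarith
qed

lemma sum_sq_tent_diff_le:
  fixes ts :: "nat \<Rightarrow> real"
  assumes inc: "\<forall>i<N. ts i < ts (Suc i)"
  shows "(\<Sum>i<N. (tent (ts i) (ts (Suc i)) a - tent (ts i) (ts (Suc i)) b)\<^sup>2) \<le> 2 * (a - b)\<^sup>2"
proof -
  let ?b = "\<lambda>i c. tent (ts i) (ts (Suc i)) c"
  have at_most_one: "card {i. i < N \<and> ?b i c \<noteq> 0} \<le> 1" for c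
  proof -
    define A where "A = {i. i < N \<and> ?b i c \<noteq> 0}"
    have "finite A" unfolding A_def by simp
    moreover have "\<forall>i\<in>A. \<forall>j\<in>A. i = j" unfolding A_def using tents_disjoint[OF inc] by blast
    ultimately have "card A \<le> Suc 0" by (simp only: card_le_Suc0_iff_eq)
    then show ?thesis unfolding A_def by simp
  qed
  let ?I = "{i. i < N \<and> ?b i a \<noteq> 0} \<union> {i. i < N \<and> ?b i b \<noteq> 0}"
  have "(\<Sum>i<N. (?b i a - ?b i b)\<^sup>2) = (\<Sum>i\<in>?I. (?b i a - ?b i b)\<^sup>2)"
    by (rule sum.mono_neutral_right) auto
  also have "\<dots> \<le> (\<Sum>i\<in>?I. (a - b)\<^sup>2)"
    using tent_lipschitz by (intro sum_mono) (simp add: abs_le_square_iff)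
  also have "\<dots> = real (card ?I) * (a - b)\<^sup>2" by simp
  also have "\<dots> \<le> 2 * (a - b)\<^sup>2"
  proof (intro mult_right_mono)
    show "real (card ?I) \<le> 2"
      using card_Un_le[of "{i. i < N \<and> ?b i a \<noteq> 0}" "{i. i < N \<and> ?b i b \<noteq> 0}"]
        at_most_one[of a] at_most_one[of b] by linarith
  qed simp
  finally show ?thesis .
qed

lemma chain_cover:
  fixes ts :: "nat \<Rightarrow> real"
  assumes "ts 0 \<le> a"
  shows "(\<exists>i<j. ts i \<le> a \<and> a \<le> ts (Suc i)) \<or> ts j \<le> a"
proof (induction j)
  case (Suc j)
  then show ?case by (metis less_Suc_eq nle_le)
qed (use assms in simp)

lemma infdist_chain_le:
  fixes ts :: "nat \<Rightarrow> real"
  assumes "ts 0 \<le> a" "a \<le> M"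
  shows "(infdist a (insert M (ts ` {..j})))\<^sup>2
           \<le> (\<Sum>i<j. (tent (ts i) (ts (Suc i)) a)\<^sup>2) + (tent (ts j) M a)\<^sup>2"
proof -
  let ?T = "insert M (ts ` {..j})"
  have sq_le: "(infdist a ?T)\<^sup>2 \<le> (tent s t a)\<^sup>2" if "s \<in> ?T" "t \<in> ?T" "s \<le> a" "a \<le> t" for s t
  proof -
    have "infdist a ?T \<le> tent s t a"
      using infdist_le[OF that(1), of a] infdist_le[OF that(2), of a] that(3,4)
      by (simp add: tent_eq_min dist_real_def)
    then show ?thesis by (intro power_mono infdist_nonneg)
  qed
  have sum_nonneg: "0 \<le> (\<Sum>i<j. (tent (ts i) (ts (Suc i)) a)\<^sup>2)" by (intro sum_nonneg) simp
  from chain_cover[of ts a j, OF assms(1)] show ?thesis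
  proof
    assume "\<exists>i<j. ts i \<le> a \<and> a \<le> ts (Suc i)"
    then obtain i where i: "i < j" "ts i \<le> a" "a \<le> ts (Suc i)" by blast
    then have "(infdist a ?T)\<^sup>2 \<le> (tent (ts i) (ts (Suc i)) a)\<^sup>2" by (intro sq_le) auto
    also have "\<dots> \<le> (\<Sum>i<j. (tent (ts i) (ts (Suc i)) a)\<^sup>2)"
      using i by (intro member_le_sum) auto
    finally show ?thesis by (simp add: add_increasing2)
  next
    assume "ts j \<le> a"
    then have "(infdist a ?T)\<^sup>2 \<le> (tent (ts j) M a)\<^sup>2" using assms(2) by (intro sq_le) auto
    then show ?thesis using sum_nonneg by linarith
  qed
qed

lemma greedy_chain:
  fixes e :: "real \<Rightarrow> real \<Rightarrow> real"
  assumes cont: "\<And>s. continuous_on UNIV (e s)" and e_same: "\<And>s. e s s = 0"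
    and "0 < C" "0 \<le> M"
  shows "\<exists>j ts. j \<le> N \<and> ts 0 = 0 \<and> ts j \<le> M \<and>
           (\<forall>i<j. ts i < ts (Suc i) \<and> e (ts i) (ts (Suc i)) = C) \<and> (j < N \<longrightarrow> e (ts j) M \<le> C)"
proof (induction N)
  case 0
  show ?case using \<open>0 \<le> M\<close> by (intro exI[of _ 0] exI[of _ "\<lambda>_. 0"]) simp
next
  case (Suc N)
  then obtain j ts where j: "j \<le> N" "ts 0 = 0" "ts j \<le> M"
    and chain: "\<forall>i<j. ts i < ts (Suc i) \<and> e (ts i) (ts (Suc i)) = C"
    and stop: "j < N \<longrightarrow> e (ts j) M \<le> C" by blast
  show ?case
  proof (cases "e (ts j) M \<le> C")
    case True
    then show ?thesis using j chain by (intro exI[of _ j] exI[of _ ts]) auto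
  next
    case False
    then have "j = N" using stop j(1) by linarith
    obtain t where t: "ts j \<le> t" "t \<le> M" "e (ts j) t = C"
      using IVT'[of "e (ts j)" "ts j" C M] e_same \<open>0 < C\<close> False j(3) cont
      by (force intro: continuous_on_subset)
    then have "ts j < t" using e_same \<open>0 < C\<close> by (metis order_le_less order_less_irrefl)
    then show ?thesis using j chain t \<open>j = N\<close>
      by (intro exI[of _ "Suc j"] exI[of _ "ts(Suc j := t)"]) (auto simp: less_Suc_eq)
  qed
qed

section \<open>Polynomials and matrices\<close>

lemma kernel_dim_le_1:
  fixes B :: "'a::field mat"
  assumes B: "B \<in> carrier_mat n n" and w: "w \<in> mat_kernel B"
    and multiple: "\<And>u. u \<in> mat_kernel B \<Longrightarrow> \<exists>c. u = c \<cdot>\<^sub>v w"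
  shows "kernel_dim B \<le> 1"
proof -
  interpret K: kernel n n B by unfold_locales (rule B)
  have "K.Ker.span {w} = mat_kernel B"
  proof
    show "K.Ker.span {w} \<subseteq> mat_kernel B" using w by (intro K.Ker.span_is_subset2) auto
    show "mat_kernel B \<subseteq> K.Ker.span {w}"
    proof
      fix u assume "u \<in> mat_kernel B"
      then obtain c where c: "u = c \<cdot>\<^sub>v w" using multiple by blast
      show "u \<in> K.Ker.span {w}"
        unfolding K.Ker.span_def
      proof (intro CollectI exI conjI)
        show "u = K.Ker.lincomb (\<lambda>_. c) {w}"
          unfolding K.Ker.lincomb_def c using w by simp
      qed (auto simp: class_field_def)
    qed
  qed
  then have "K.Ker.dim \<le> card {w}"
    using w by (intro K.Ker.gen_ge_dim) auto
  then show ?thesis by simp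
qed

lemma proots_prod_linear: "proots (\<Prod>r\<leftarrow>rs. [:- r, 1:]) = mset (rs :: 'a::idom list)"
proof (induction rs)
  case (Cons r rs)
  have "(\<Prod>r\<leftarrow>rs. [:- r, 1:]) \<noteq> 0" by (auto simp: prod_list_zero_iff)
  then have "proots ([:- r, 1:] * (\<Prod>r\<leftarrow>rs. [:- r, 1:]))
      = proots [:- r, 1:] + proots (\<Prod>r\<leftarrow>rs. [:- r, 1:])"
    by (intro proots_mult) auto
  then show ?case using Cons.IH by simp
qed simp

lemma count_proots_prod_linear_powers:
  fixes nas :: "(nat \<times> 'a::idom) list"
  shows "count (proots (\<Prod>(m, a)\<leftarrow>nas. [:- a, 1:] ^ m)) c = sum_list (map fst [(m, e)\<leftarrow>nas. e = c])"
proof (induction nas)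
  case (Cons p nas)
  obtain m a where p: "p = (m, a)" by (cases p)
  have "(\<Prod>(m, a)\<leftarrow>nas. [:- a, 1:] ^ m) \<noteq> 0"
    by (induction nas) auto
  then have "count (proots (\<Prod>(m, a)\<leftarrow>p # nas. [:- a, 1:] ^ m)) c
      = count (proots ([:- a, 1:] ^ m)) c + count (proots (\<Prod>(m, a)\<leftarrow>nas. [:- a, 1:] ^ m)) c"
    by (simp add: p proots_mult)
  also have "count (proots ([:- a, 1:] ^ m)) c = (if a = c then m else 0)"
    by (simp add: proots_power)
  finally show ?case using Cons p by simp
qed simp

lemma min_sum_list_le: "min m (sum_list xs) \<le> sum_list (map (min (m::nat)) xs)"
  by (induction xs) auto

lemma two_le_count_mset:
  assumes "i < length xs" "j < length xs" "i \<noteq> j" "xs ! i = a" "xs ! j = a"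
  shows "2 \<le> count (mset xs) a"
proof -
  have "card {i, j} \<le> card {k. k < length xs \<and> a = xs ! k}"
    using assms by (intro card_mono) auto
  also have "\<dots> = count (mset xs) a"
    by (simp add: count_mset count_list_eq_length_filter length_filter_conv_card)
  finally show ?thesis using assms(3) by simp
qed

section \<open>Graphs with positive degrees\<close>

locale walk_graph =
  fixes n :: nat and E :: "nat \<Rightarrow> nat \<Rightarrow> bool"
  assumes simple: "simple_graph n E"
    and n_pos: "0 < n"
    and gdeg_pos: "\<And>x. x < n \<Longrightarrow> 0 < gdeg n E x"
begin

definition deg :: "nat \<Rightarrow> real" where
  "deg x = real (gdeg n E x)"

definition adj :: "(nat \<Rightarrow> 'a::comm_monoid_add) \<Rightarrow> nat \<Rightarrow> 'a" where
  "adj u x = (\<Sum>y<n. if E x y then u y else 0)"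

(* Sums run over ordered pairs, so every edge is counted twice. *)
definition edge_sum :: "(nat \<Rightarrow> nat \<Rightarrow> real) \<Rightarrow> real" where
  "edge_sum g = (\<Sum>x<n. \<Sum>y<n. if E x y then g x y else 0)"

definition sq_norm :: "(nat \<Rightarrow> real) \<Rightarrow> real" where
  "sq_norm f = (\<Sum>x<n. deg x * (f x)\<^sup>2)"

definition dirichlet :: "(nat \<Rightarrow> real) \<Rightarrow> real" where
  "dirichlet f = edge_sum (\<lambda>x y. (f x - f y)\<^sup>2)"

lemma edge_sym: "E x y \<Longrightarrow> E y x"
  using simple unfolding simple_graph_def by blast

lemma edge_irrefl: "\<not> E x x"
  using simple unfolding simple_graph_def by blast

lemma deg_pos: "x < n \<Longrightarrow> 0 < deg x"
  unfolding deg_def using gdeg_pos by simp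

lemma deg_nonzero: "x < n \<Longrightarrow> deg x \<noteq> 0"
  using deg_pos by force

lemma deg_nonneg: "0 \<le> deg x"
  unfolding deg_def by simp

lemma two_le_n: "2 \<le> n"
proof (rule ccontr)
  assume "\<not> 2 \<le> n"
  then have "n = 1" using n_pos by simp
  then have "gdeg n E 0 = 0" unfolding gdeg_def using edge_irrefl by auto
  then show False using gdeg_pos \<open>n = 1\<close> by simp
qed

lemma adj_const: "adj (\<lambda>_. c) x = c * deg x"
proof -
  have "adj (\<lambda>_. c) x = (\<Sum>y\<in>{y. y < n \<and> E x y}. c)"
    unfolding adj_def by (rule sum.mono_neutral_cong_right) auto
  then show ?thesis unfolding deg_def gdeg_def by simp
qed

lemma adj_mono: "(\<And>y. y < n \<Longrightarrow> u y \<le> v y) \<Longrightarrow> adj u x \<le> (adj v x :: real)"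
  unfolding adj_def by (intro sum_mono) auto

lemma adj_sum: "adj (\<lambda>y. \<Sum>i\<in>I. u i y) x = (\<Sum>i\<in>I. adj (u i) x)"
  unfolding adj_def by (subst sum.swap) (auto intro: sum.cong)

lemma adj_diff: "adj (\<lambda>y. u y - v y) x = adj u x - (adj v x :: real)"
  unfolding adj_def sum_subtractf[symmetric] by (intro sum.cong) auto

lemma edge_sum_eq_adj: "edge_sum (\<lambda>x y. f x * g y) = (\<Sum>x<n. f x * adj g x)"
  unfolding edge_sum_def adj_def sum_distrib_left by (intro sum.cong refl) auto

lemma edge_sum_left: "edge_sum (\<lambda>x y. g x) = (\<Sum>x<n. deg x * g x)"
  using edge_sum_eq_adj[of g "\<lambda>_. 1"] by (simp add: adj_const mult.commute)

lemma edge_sum_swap: "edge_sum g = edge_sum (\<lambda>x y. g y x)"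
proof -
  have "edge_sum g = (\<Sum>y<n. \<Sum>x<n. if E x y then g x y else 0)"
    unfolding edge_sum_def by (rule sum.swap)
  also have "\<dots> = edge_sum (\<lambda>x y. g y x)"
    unfolding edge_sum_def by (intro sum.cong refl) (auto dest: edge_sym)
  finally show ?thesis .
qed

lemma edge_sum_right: "edge_sum (\<lambda>x y. g y) = (\<Sum>x<n. deg x * g x)"
  using edge_sum_swap[of "\<lambda>x y. g y"] edge_sum_left by simp

lemma sum_adj: "(\<Sum>x<n. adj u x) = (\<Sum>x<n. deg x * u x)"
  using edge_sum_eq_adj[of "\<lambda>_. 1" u] edge_sum_right[of u] by simp

lemma edge_sum_add: "edge_sum (\<lambda>x y. a x y + b x y) = edge_sum a + edge_sum b"
  unfolding edge_sum_def sum.distrib[symmetric] by (intro sum.cong refl) auto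

lemma edge_sum_cmult: "edge_sum (\<lambda>x y. c * a x y) = c * edge_sum a"
  unfolding edge_sum_def sum_distrib_left by (intro sum.cong refl) auto

lemma edge_sum_diff: "edge_sum (\<lambda>x y. a x y - b x y) = edge_sum a - edge_sum b"
  unfolding edge_sum_def sum_subtractf[symmetric] by (intro sum.cong refl) auto

lemma edge_sum_sum: "finite I \<Longrightarrow> edge_sum (\<lambda>x y. \<Sum>i\<in>I. a i x y) = (\<Sum>i\<in>I. edge_sum (a i))"
  by (induction I rule: finite_induct) (simp_all add: edge_sum_add, simp add: edge_sum_def)

lemma edge_sum_mono:
  "(\<And>x y. x < n \<Longrightarrow> y < n \<Longrightarrow> E x y \<Longrightarrow> a x y \<le> b x y) \<Longrightarrow> edge_sum a \<le> edge_sum b"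
  unfolding edge_sum_def by (intro sum_mono) auto

lemma edge_sum_cong:
  "(\<And>x y. x < n \<Longrightarrow> y < n \<Longrightarrow> E x y \<Longrightarrow> a x y = b x y) \<Longrightarrow> edge_sum a = edge_sum b"
  unfolding edge_sum_def by (intro sum.cong refl) auto

lemma edge_sum_nonneg:
  "(\<And>x y. x < n \<Longrightarrow> y < n \<Longrightarrow> E x y \<Longrightarrow> 0 \<le> a x y) \<Longrightarrow> 0 \<le> edge_sum a"
  using edge_sum_mono[of "\<lambda>x y. 0" a] unfolding edge_sum_def by simp

lemma dirichlet_eq: "dirichlet f = 2 * sq_norm f - 2 * edge_sum (\<lambda>x y. f x * f y)"
proof -
  have "dirichlet f = edge_sum (\<lambda>x y. (f x)\<^sup>2 + (f y)\<^sup>2 - 2 * (f x * f y))"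
    unfolding dirichlet_def by (rule edge_sum_cong) (simp add: power2_eq_square algebra_simps)
  also have "\<dots> = 2 * sq_norm f - 2 * edge_sum (\<lambda>x y. f x * f y)"
    by (simp add: edge_sum_diff edge_sum_add edge_sum_cmult edge_sum_left edge_sum_right sq_norm_def)
  finally show ?thesis .
qed

lemma dirichlet_nonneg: "0 \<le> dirichlet f"
  unfolding dirichlet_def by (rule edge_sum_nonneg) simp

lemma sq_norm_nonneg: "0 \<le> sq_norm f"
  unfolding sq_norm_def by (intro sum_nonneg mult_nonneg_nonneg deg_nonneg) simp

lemma sq_norm_pos: "x < n \<Longrightarrow> f x \<noteq> 0 \<Longrightarrow> 0 < sq_norm f"
  unfolding sq_norm_def using deg_pos deg_nonneg by (intro sum_pos2[of _ x]) auto

lemma gvol_eq_sum_deg: "real (gvol n E S) = (\<Sum>x\<in>S. deg x)"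
  unfolding gvol_def deg_def by simp

lemma gvol_pos: "S \<subseteq> {0..<n} \<Longrightarrow> S \<noteq> {} \<Longrightarrow> 0 < real (gvol n E S)"
  unfolding gvol_eq_sum_deg using deg_pos
  by (intro sum_pos) (auto intro: finite_subset)

lemma card_gboundary_eq_edge_sum:
  assumes "S \<subseteq> {..<n}"
  shows "real (card (gboundary n E S)) = edge_sum (\<lambda>x y. if x \<in> S \<and> y \<notin> S then 1 else 0)"
proof -
  have "gboundary n E S \<subseteq> {..<n} \<times> {..<n}"
    using assms unfolding gboundary_def by auto
  then have "real (card (gboundary n E S)) = (\<Sum>p\<in>{..<n} \<times> {..<n}. if p \<in> gboundary n E S then 1 else 0)"
    by (simp add: sum.If_cases Int_absorb1)
  also have "\<dots> = (\<Sum>(x, y)\<in>{..<n} \<times> {..<n}. if (x, y) \<in> gboundary n E S then 1 else 0)"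
    by (intro sum.cong) auto
  also have "\<dots> = (\<Sum>x<n. \<Sum>y<n. if (x, y) \<in> gboundary n E S then 1 else 0)"
    by (rule sum.cartesian_product[symmetric])
  also have "\<dots> = edge_sum (\<lambda>x y. if x \<in> S \<and> y \<notin> S then 1 else 0)"
    unfolding edge_sum_def gboundary_def by (intro sum.cong refl) auto
  finally show ?thesis .
qed

lemma cheeger_mult_gvol_le:
  assumes S: "S \<subseteq> {0..<n}" "S \<noteq> {}" "stat_measure n E S \<le> 1/2"
  shows "cheeger n E * real (gvol n E S) \<le> real (card (gboundary n E S))"
proof -
  let ?r = "\<lambda>S. real (card (gboundary n E S)) / real (gvol n E S)"
  let ?P = "\<lambda>S. S \<subseteq> {0..<n} \<and> S \<noteq> {} \<and> stat_measure n E S \<le> 1/2"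
  have "{?r S | S. ?P S} \<subseteq> ?r ` Pow {0..<n}" by auto
  then have "finite {?r S | S. ?P S}" by (rule finite_subset) simp
  then have "cheeger n E \<le> ?r S"
    unfolding cheeger_def by (rule Min_le) (use S in blast)
  then show ?thesis using gvol_pos[OF S(1,2)] by (simp add: field_simps)
qed

lemma stat_measure_mono: "A \<subseteq> B \<Longrightarrow> finite B \<Longrightarrow> stat_measure n E A \<le> stat_measure n E B"
  unfolding stat_measure_def gvol_def
  by (intro divide_right_mono) (auto intro!: sum_mono2 sum_nonneg)

lemma stat_measure_add_compl:
  assumes "S \<subseteq> {0..<n}"
  shows "stat_measure n E S + stat_measure n E ({0..<n} - S) = 1"
proof -
  have "gvol n E {0..<n} = gvol n E S + gvol n E ({0..<n} - S)"
    unfolding gvol_def using assms by (metis finite_atLeastLessThan sum.subset_diff add.commute)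
  then show ?thesis
    unfolding stat_measure_def using gvol_pos[of "{0..<n}"] n_pos
    by (simp add: add_divide_distrib[symmetric])
qed

lemma split_lowest_level:
  fixes h :: "nat \<Rightarrow> real"
  assumes h_nonneg: "\<And>x. x < n \<Longrightarrow> 0 \<le> h x"
    and S: "S = {x. x < n \<and> 0 < h x}" and a: "\<And>x. x \<in> S \<Longrightarrow> a \<le> h x"
    and h': "h' = (\<lambda>x. if x \<in> S then h x - a else 0)"
  shows "(\<Sum>x<n. deg x * h x) = a * real (gvol n E S) + (\<Sum>x<n. deg x * h' x)"
    and "edge_sum (\<lambda>x y. max 0 (h x - h y))
           = a * real (card (gboundary n E S)) + edge_sum (\<lambda>x y. max 0 (h' x - h' y))"
proof -
  have S_sub: "S \<subseteq> {..<n}" unfolding S by auto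
  have h_zero: "\<And>x. x < n \<Longrightarrow> x \<notin> S \<Longrightarrow> h x = 0"
    using h_nonneg unfolding S by force
  have h_pos: "\<And>x. x \<in> S \<Longrightarrow> 0 < h x" unfolding S by simp
  have gvol: "real (gvol n E S) = (\<Sum>x<n. deg x * (if x \<in> S then 1 else 0))"
    unfolding gvol_eq_sum_deg using S_sub by (intro sum.mono_neutral_cong_left) auto
  show "(\<Sum>x<n. deg x * h x) = a * real (gvol n E S) + (\<Sum>x<n. deg x * h' x)"
    unfolding gvol sum_distrib_left sum.distrib[symmetric]
    using h_zero by (intro sum.cong refl) (auto simp: h' algebra_simps)
  show "edge_sum (\<lambda>x y. max 0 (h x - h y))
           = a * real (card (gboundary n E S)) + edge_sum (\<lambda>x y. max 0 (h' x - h' y))"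
    unfolding card_gboundary_eq_edge_sum[OF S_sub] edge_sum_cmult[symmetric] edge_sum_add[symmetric]
  proof (rule edge_sum_cong)
    fix x y assume "x < n" "y < n"
    then show "max 0 (h x - h y) = a * (if x \<in> S \<and> y \<notin> S then 1 else 0) + max 0 (h' x - h' y)"
      using h_zero[of x] h_zero[of y] h_pos[of x] h_pos[of y] a[of x] a[of y]
      by (cases "x \<in> S"; cases "y \<in> S") (auto simp: h' max_def)
  qed
qed

(* Peel off the lowest level set of h and apply the definition of Phi to it. *)
lemma cheeger_coarea:
  fixes h :: "nat \<Rightarrow> real"
  assumes "\<And>x. x < n \<Longrightarrow> 0 \<le> h x" and "stat_measure n E {x. x < n \<and> 0 < h x} \<le> 1/2"
  shows "cheeger n E * (\<Sum>x<n. deg x * h x) \<le> edge_sum (\<lambda>x y. max 0 (h x - h y))"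
  using assms
proof (induction "card {x. x < n \<and> 0 < h x}" arbitrary: h rule: less_induct)
  case less
  define S where "S = {x. x < n \<and> 0 < h x}"
  have finS: "finite S" unfolding S_def by simp
  show ?case
  proof (cases "S = {}")
    case True
    then have "\<And>x. x < n \<Longrightarrow> h x = 0" using less.prems(1) unfolding S_def by force
    then show ?thesis using edge_sum_nonneg[of "\<lambda>x y. max 0 (h x - h y)"] by simp
  next
    case False
    define a where "a = Min (h ` S)"
    have "a \<in> h ` S" unfolding a_def using False finS by (intro Min_in) auto
    then obtain z where z: "z \<in> S" "h z = a" by auto
    have a_le: "\<And>x. x \<in> S \<Longrightarrow> a \<le> h x" unfolding a_def using finS by simp
    have a_pos: "0 < a" using z unfolding S_def by simp
    define h' where "h' = (\<lambda>x. if x \<in> S then h x - a else 0)"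
    have supp': "{x. x < n \<and> 0 < h' x} \<subseteq> S - {z}"
      unfolding h'_def S_def using z by auto
    have "card {x. x < n \<and> 0 < h' x} \<le> card (S - {z})"
      using supp' finS by (intro card_mono) auto
    also have "\<dots> < card S" using finS z(1) by (rule card_Diff1_less)
    finally have fewer: "card {x. x < n \<and> 0 < h' x} < card {x. x < n \<and> 0 < h x}"
      by (simp only: S_def)
    have "stat_measure n E {x. x < n \<and> 0 < h' x} \<le> stat_measure n E S"
      using supp' finS by (intro stat_measure_mono) auto
    moreover have small: "stat_measure n E S \<le> 1/2" using less.prems(2) unfolding S_def .
    ultimately have small': "stat_measure n E {x. x < n \<and> 0 < h' x} \<le> 1/2" by linarith
    have "\<And>x. x < n \<Longrightarrow> 0 \<le> h' x" using a_le unfolding h'_def by auto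
    then have IH: "cheeger n E * (\<Sum>x<n. deg x * h' x) \<le> edge_sum (\<lambda>x y. max 0 (h' x - h' y))"
      using less.hyps[OF fewer] small' by blast
    have "S \<subseteq> {0..<n}" unfolding S_def by auto
    then have "cheeger n E * real (gvol n E S) \<le> real (card (gboundary n E S))"
      using cheeger_mult_gvol_le False small by blast
    then have "cheeger n E * (a * real (gvol n E S) + (\<Sum>x<n. deg x * h' x))
        \<le> a * real (card (gboundary n E S)) + edge_sum (\<lambda>x y. max 0 (h' x - h' y))"
      using IH a_pos by (simp add: distrib_left mult.left_commute add_mono)
    then show ?thesis
      using split_lowest_level[OF less.prems(1) S_def a_le h'_def] by simp
  qed
qed

lemma cheeger_integral_infdist_le:
  fixes f :: "nat \<Rightarrow> real" and T :: "real set"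
  assumes f_nonneg: "\<And>x. x < n \<Longrightarrow> 0 \<le> f x"
    and small: "stat_measure n E {x. x < n \<and> 0 < f x} \<le> 1/2"
  defines "h \<equiv> \<lambda>x. integral {0..f x} (\<lambda>s. infdist s T)"
  shows "cheeger n E * (\<Sum>x<n. deg x * h x)
           \<le> 2 * dirichlet f + 1/4 * (\<Sum>x<n. deg x * (infdist (f x) T)\<^sup>2)"
proof -
  have h_nonneg: "\<And>x. x < n \<Longrightarrow> 0 \<le> h x" unfolding h_def by (rule integral_infdist_nonneg)
  have "{x. x < n \<and> 0 < h x} \<subseteq> {x. x < n \<and> 0 < f x}"
  proof
    fix x assume "x \<in> {x. x < n \<and> 0 < h x}"
    then have x: "x < n" "0 < h x" by auto
    then have "f x \<noteq> 0" unfolding h_def by auto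
    then show "x \<in> {x. x < n \<and> 0 < f x}" using x(1) f_nonneg[OF x(1)] by simp
  qed
  then have "stat_measure n E {x. x < n \<and> 0 < h x} \<le> stat_measure n E {x. x < n \<and> 0 < f x}"
    by (rule stat_measure_mono) simp
  then have "cheeger n E * (\<Sum>x<n. deg x * h x) \<le> edge_sum (\<lambda>x y. max 0 (h x - h y))"
    using small h_nonneg by (intro cheeger_coarea) auto
  also have "\<dots> \<le> edge_sum (\<lambda>x y. 2 * (f x - f y)\<^sup>2 + 1/4 * (infdist (f x) T)\<^sup>2)"
  proof (rule edge_sum_mono)
    fix x y assume "x < n" "y < n"
    then show "max 0 (h x - h y) \<le> 2 * (f x - f y)\<^sup>2 + 1/4 * (infdist (f x) T)\<^sup>2"
      using integral_infdist_diff_le[OF f_nonneg f_nonneg, of x y T] unfolding h_def by simp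
  qed
  also have "\<dots> = 2 * dirichlet f + 1/4 * (\<Sum>x<n. deg x * (infdist (f x) T)\<^sup>2)"
    unfolding edge_sum_add edge_sum_cmult dirichlet_def edge_sum_left ..
  finally show ?thesis .
qed

lemma sum_deg_infdist_chain_le:
  fixes f ts :: "nat \<Rightarrow> real"
  assumes "\<And>x. x < n \<Longrightarrow> ts 0 \<le> f x" and "\<And>x. x < n \<Longrightarrow> f x \<le> M"
  shows "(\<Sum>x<n. deg x * (infdist (f x) (insert M (ts ` {..j})))\<^sup>2)
           \<le> (\<Sum>i<j. sq_norm (\<lambda>x. tent (ts i) (ts (Suc i)) (f x))) + sq_norm (\<lambda>x. tent (ts j) M (f x))"
proof -
  have "(\<Sum>x<n. deg x * (infdist (f x) (insert M (ts ` {..j})))\<^sup>2)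
      \<le> (\<Sum>x<n. deg x * ((\<Sum>i<j. (tent (ts i) (ts (Suc i)) (f x))\<^sup>2) + (tent (ts j) M (f x))\<^sup>2))"
    using infdist_chain_le assms deg_nonneg by (intro sum_mono mult_left_mono) auto
  also have "\<dots> = (\<Sum>i<j. sq_norm (\<lambda>x. tent (ts i) (ts (Suc i)) (f x))) + sq_norm (\<lambda>x. tent (ts j) M (f x))"
    unfolding sq_norm_def sum_distrib_left distrib_left sum.distrib
    by (subst sum.swap) simp
  finally show ?thesis .
qed

lemma median_exists:
  fixes v :: "nat \<Rightarrow> real"
  obtains m where "stat_measure n E {x. x < n \<and> m < v x} \<le> 1/2"
    and "stat_measure n E {x. x < n \<and> v x < m} \<le> 1/2"
proof -
  define W where "W = v ` {..<n}"
  have finW: "finite W" "W \<noteq> {}" unfolding W_def using n_pos by auto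
  define P where "P t \<longleftrightarrow> stat_measure n E {x. x < n \<and> t < v x} \<le> 1/2" for t
  have no_above: "{x. x < n \<and> Max W < v x} = {}" using finW unfolding W_def by (auto simp: not_less)
  have "P (Max W)" unfolding P_def no_above stat_measure_def gvol_def by simp
  then have "Max W \<in> {t \<in> W. P t}" using finW by simp
  then have finP: "finite {t \<in> W. P t}" "{t \<in> W. P t} \<noteq> {}" using finW(1) by auto
  define m where "m = Min {t \<in> W. P t}"
  have Pm: "P m" unfolding m_def using Min_in[OF finP] by auto
  have m_least: "\<And>t. t \<in> W \<Longrightarrow> P t \<Longrightarrow> m \<le> t" unfolding m_def using finP by simp
  have "stat_measure n E {x. x < n \<and> v x < m} \<le> 1/2"
  proof (cases "{t \<in> W. t < m} = {}")
    case True
    then have no_below: "{x. x < n \<and> v x < m} = {}" unfolding W_def by auto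
    show ?thesis unfolding no_below stat_measure_def gvol_def by simp
  next
    case False
    define t' where "t' = Max {t \<in> W. t < m}"
    have t': "t' \<in> W" "t' < m" using Max_in[OF _ False] finW unfolding t'_def by auto
    have below: "\<And>x. x < n \<Longrightarrow> v x < m \<Longrightarrow> v x \<le> t'"
      unfolding t'_def W_def using finW by (intro Max_ge) auto
    have above: "{x. x < n \<and> t' < v x} = {0..<n} - {x. x < n \<and> v x < m}"
      using below t'(2) by fastforce
    have "\<not> P t'" using m_least[OF t'(1)] t'(2) by fastforce
    then have "1/2 < stat_measure n E ({0..<n} - {x. x < n \<and> v x < m})"
      unfolding P_def above by simp
    moreover have "stat_measure n E {x. x < n \<and> v x < m}
        + stat_measure n E ({0..<n} - {x. x < n \<and> v x < m}) = 1"
      by (rule stat_measure_add_compl) auto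
    ultimately show ?thesis by linarith
  qed
  then show ?thesis using Pm that unfolding P_def by blast
qed

lemma nonneg_part_rayleigh:
  fixes v :: "nat \<Rightarrow> real"
  assumes eigen: "\<And>x. x < n \<Longrightarrow> adj v x = \<mu> * deg x * v x"
    and "\<mu> < 1" and orth: "(\<Sum>x<n. deg x * v x) = 0" and "0 < sq_norm v"
  obtains f where "\<And>x. x < n \<Longrightarrow> 0 \<le> f x" "0 < sq_norm f"
    "dirichlet f \<le> 2 * (1 - \<mu>) * sq_norm f" "stat_measure n E {x. x < n \<and> 0 < f x} \<le> 1/2"
proof -
  define g where "g = 2 * (1 - \<mu>)"
  have "edge_sum (\<lambda>x y. v x * v y) = \<mu> * sq_norm v"
    unfolding edge_sum_eq_adj sq_norm_def sum_distrib_left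
    using eigen by (intro sum.cong refl) (simp add: power2_eq_square)
  then have dir_v: "dirichlet v = g * sq_norm v"
    unfolding dirichlet_eq g_def by (simp add: algebra_simps)
  obtain m where m1: "stat_measure n E {x. x < n \<and> m < v x} \<le> 1/2"
    and m2: "stat_measure n E {x. x < n \<and> v x < m} \<le> 1/2"
    using median_exists by blast
  define f1 where "f1 x = max 0 (v x - m)" for x
  define f2 where "f2 x = max 0 (m - v x)" for x
  have "(f1 x - f1 y)\<^sup>2 + (f2 x - f2 y)\<^sup>2 \<le> (v x - v y)\<^sup>2" for x y
    using sq_diff_pos_part_add_neg_part_le[of "v x - m" "v y - m"] unfolding f1_def f2_def by simp
  then have "dirichlet f1 + dirichlet f2 \<le> dirichlet v"
    unfolding dirichlet_def edge_sum_add[symmetric] by (intro edge_sum_mono)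
  moreover have "sq_norm v \<le> sq_norm f1 + sq_norm f2"
  proof -
    have "sq_norm f1 + sq_norm f2 = (\<Sum>x<n. deg x * (v x - m)\<^sup>2)"
      unfolding sq_norm_def sum.distrib[symmetric]
      by (intro sum.cong refl) (auto simp: f1_def f2_def max_def power2_eq_square algebra_simps)
    also have "\<dots> = sq_norm v + m\<^sup>2 * (\<Sum>x<n. deg x) - 2 * m * (\<Sum>x<n. deg x * v x)"
      unfolding sq_norm_def
      by (simp add: power2_eq_square algebra_simps sum.distrib sum_subtractf sum_distrib_left)
    finally show ?thesis using orth sum_nonneg[of "{..<n}" deg] deg_nonneg by simp
  qed
  moreover have "0 < g" unfolding g_def using \<open>\<mu> < 1\<close> by simp
  ultimately have "(0 < sq_norm f1 \<and> dirichlet f1 \<le> g * sq_norm f1)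
      \<or> (0 < sq_norm f2 \<and> dirichlet f2 \<le> g * sq_norm f2)"
    using dir_v \<open>0 < sq_norm v\<close>
    by (intro ratio_le_of_sum_ratio_le dirichlet_nonneg sq_norm_nonneg)
      (auto intro: order_trans[OF _ mult_left_mono])
  moreover have "{x. x < n \<and> 0 < f1 x} = {x. x < n \<and> m < v x}"
    "{x. x < n \<and> 0 < f2 x} = {x. x < n \<and> v x < m}" unfolding f1_def f2_def by auto
  ultimately show ?thesis
    using that[of f1] that[of f2] m1 m2 unfolding g_def f1_def f2_def by force
qed

lemma walk_matrix_carrier: "walk_matrix n E \<in> carrier_mat n n"
  unfolding walk_matrix_def by simp

lemma walk_matrix_index:
  "i < n \<Longrightarrow> j < n \<Longrightarrow> walk_matrix n E $$ (i, j) = (if E i j then 1 / deg i else 0)"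
  unfolding walk_matrix_def deg_def by simp

lemma walk_mult_vec:
  fixes v :: "'a::real_field Matrix.vec"
  assumes v: "v \<in> carrier_vec n" and i: "i < n"
  shows "(map_mat of_real (walk_matrix n E) *\<^sub>v v) $ i = adj (($) v) i / of_real (deg i)"
proof -
  have "(map_mat of_real (walk_matrix n E) *\<^sub>v v) $ i
      = (\<Sum>j\<in>{0..<n}. of_real (walk_matrix n E $$ (i, j)) * v $ j)"
    using v i walk_matrix_carrier by (auto simp: scalar_prod_def)
  also have "\<dots> = (\<Sum>j<n. (if E i j then v $ j else 0) / of_real (deg i))"
    using i by (intro sum.cong) (auto simp: walk_matrix_index of_real_divide)
  finally show ?thesis by (simp add: adj_def sum_divide_distrib)
qed

lemma walk_eigenvector:
  fixes v :: "'a::real_field Matrix.vec"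
  assumes "eigenvector (map_mat of_real (walk_matrix n E)) v \<mu>"
  shows "v \<in> carrier_vec n" and "\<And>x. x < n \<Longrightarrow> adj (($) v) x = \<mu> * of_real (deg x) * v $ x"
    and "\<exists>x<n. v $ x \<noteq> 0"
proof -
  have v: "v \<in> carrier_vec n" and v0: "v \<noteq> 0\<^sub>v n"
    and eq: "map_mat of_real (walk_matrix n E) *\<^sub>v v = \<mu> \<cdot>\<^sub>v v"
    using assms walk_matrix_carrier unfolding eigenvector_def by auto
  show "v \<in> carrier_vec n" by (rule v)
  show "adj (($) v) x = \<mu> * of_real (deg x) * v $ x" if x: "x < n" for x
  proof -
    have "adj (($) v) x / of_real (deg x) = \<mu> * v $ x"
      using walk_mult_vec[OF v x] arg_cong[OF eq, of "\<lambda>w. w $ x"] v x by simp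
    moreover have "of_real (deg x) \<noteq> (0 :: 'a)" using deg_pos[OF x] by simp
    ultimately show ?thesis by (simp add: field_simps)
  qed
  show "\<exists>x<n. v $ x \<noteq> 0"
  proof (rule ccontr)
    assume "\<not> ?thesis"
    then have "v = 0\<^sub>v n" using v by (intro eq_vecI) auto
    then show False using v0 by simp
  qed
qed

lemma walk_eigenvalue_complex_real:
  assumes "eigenvector (map_mat of_real (walk_matrix n E)) w (a :: complex)"
  shows "a \<in> \<real>"
proof -
  note w = walk_eigenvector[OF assms]
  define S where "S = (\<Sum>x<n. \<Sum>y<n. if E x y then cnj (w $ x) * w $ y else 0)"
  define R where "R = (\<Sum>x<n. deg x * (cmod (w $ x))\<^sup>2)"
  have "S = (\<Sum>x<n. cnj (w $ x) * adj (($) w) x)"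
    unfolding S_def adj_def sum_distrib_left by (intro sum.cong refl) auto
  also have "\<dots> = (\<Sum>x<n. a * of_real (deg x * (cmod (w $ x))\<^sup>2))"
  proof (intro sum.cong refl)
    fix x assume "x \<in> {..<n}"
    then show "cnj (w $ x) * adj (($) w) x = a * of_real (deg x * (cmod (w $ x))\<^sup>2)"
      using w(2)[of x] complex_norm_square[of "w $ x"] by (simp add: algebra_simps)
  qed
  also have "\<dots> = a * of_real R"
    unfolding R_def by (simp add: sum_distrib_left)
  finally have S_eq: "S = a * of_real R" .
  have "cnj S = (\<Sum>y<n. \<Sum>x<n. if E x y then w $ x * cnj (w $ y) else 0)"
    unfolding S_def cnj_sum by (subst sum.swap) (intro sum.cong refl, auto)
  also have "\<dots> = S"
    unfolding S_def by (intro sum.cong refl) (auto dest: edge_sym simp: mult.commute)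
  finally have "cnj a * of_real R = a * of_real R"
    using S_eq by (metis complex_cnj_complex_of_real complex_cnj_mult)
  moreover obtain x where "x < n" "w $ x \<noteq> 0" using w(3) by blast
  then have "0 < R"
    unfolding R_def using deg_pos deg_nonneg by (intro sum_pos2[of _ x]) auto
  ultimately have "cnj a = a" by simp
  then show ?thesis by (simp add: Reals_cnj_iff)
qed

lemma char_poly_walk_splits:
  obtains rs where "char_poly (walk_matrix n E) = (\<Prod>r\<leftarrow>rs. [:- r, 1:])" and "length rs = n"
proof -
  let ?C = "map_mat complex_of_real (walk_matrix n E)"
  have C: "?C \<in> carrier_mat n n" using walk_matrix_carrier by simp
  obtain as where cp: "char_poly ?C = (\<Prod>a\<leftarrow>as. [:- a, 1:])" and len: "length as = n"
    using char_poly_factorized[OF C] by blast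
  have "a \<in> \<real>" if "a \<in> set as" for a
  proof -
    have "poly (char_poly ?C) a = 0" unfolding cp using that by (rule linear_poly_root)
    then have "eigenvalue ?C a" using eigenvalue_root_char_poly[OF C] by simp
    then show ?thesis unfolding eigenvalue_def using walk_eigenvalue_complex_real by blast
  qed
  then have as: "as = map complex_of_real (map Re as)"
    by (simp add: map_idI of_real_Re)
  interpret R: map_poly_inj_idom_hom complex_of_real ..
  have "map_poly complex_of_real (char_poly (walk_matrix n E)) = char_poly ?C"
    by (rule of_real_hom.char_poly_hom[OF walk_matrix_carrier, symmetric])
  also have "\<dots> = map_poly complex_of_real (\<Prod>r\<leftarrow>map Re as. [:- r, 1:])"
    by (subst cp, subst as) (simp add: R.hom_prod_list o_def)
  finally show ?thesis using that[of "map Re as"] len by simp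
qed

lemma walk_eigenvalues:
  defines "L \<equiv> eigenvalues_desc (walk_matrix n E)"
  shows "length L = n" and "mset L = proots (char_poly (walk_matrix n E))"
    and "sorted_wrt (\<ge>) L" and "\<And>i. i < n \<Longrightarrow> eigenvalue (walk_matrix n E) (L ! i)"
proof -
  obtain rs where cp: "char_poly (walk_matrix n E) = (\<Prod>r\<leftarrow>rs. [:- r, 1:])" and "length rs = n"
    by (rule char_poly_walk_splits)
  have "proots (char_poly (walk_matrix n E)) = mset rs"
    unfolding cp by (rule proots_prod_linear)
  moreover show mset_L: "mset L = proots (char_poly (walk_matrix n E))"
    unfolding L_def eigenvalues_desc_def by simp
  ultimately show "length L = n"
    using \<open>length rs = n\<close> by (metis size_mset)
  show "sorted_wrt (\<ge>) L"
    unfolding L_def eigenvalues_desc_def by (simp add: sorted_wrt_rev)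
  fix i assume "i < n"
  then have "L ! i \<in> set rs"
    using mset_L \<open>proots _ = mset rs\<close> \<open>length L = n\<close> by (metis nth_mem set_mset_mset)
  then have "poly (char_poly (walk_matrix n E)) (L ! i) = 0"
    unfolding cp by (rule linear_poly_root)
  then show "eigenvalue (walk_matrix n E) (L ! i)"
    using eigenvalue_root_char_poly[OF walk_matrix_carrier] by simp
qed

lemma walk_eigenvalue_real_eigenfunction:
  assumes "eigenvalue (walk_matrix n E) \<mu>"
  obtains u where "\<And>x. x < n \<Longrightarrow> adj u x = \<mu> * deg x * u x" and "\<exists>x<n. u x \<noteq> 0"
proof -
  have "map_mat of_real (walk_matrix n E) = walk_matrix n E" by (intro eq_matI) auto
  then obtain v where "eigenvector (map_mat of_real (walk_matrix n E)) v \<mu>"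
    using assms unfolding eigenvalue_def by auto
  from walk_eigenvector[OF this] show ?thesis using that[of "($) v"] by simp
qed

lemma walk_eigenvalue_le_1:
  assumes "eigenvalue (walk_matrix n E) \<mu>"
  shows "\<mu> \<le> 1"
proof -
  obtain u where eq: "\<And>x. x < n \<Longrightarrow> adj u x = \<mu> * deg x * u x" and "\<exists>x<n. u x \<noteq> 0"
    using walk_eigenvalue_real_eigenfunction[OF assms] by blast
  define M where "M = Max ((\<lambda>x. \<bar>u x\<bar>) ` {..<n})"
  have M_ge: "\<And>x. x < n \<Longrightarrow> \<bar>u x\<bar> \<le> M" unfolding M_def by (intro Max_ge) auto
  have "M \<in> (\<lambda>x. \<bar>u x\<bar>) ` {..<n}" unfolding M_def using n_pos by (intro Max_in) auto
  then obtain z where z: "z < n" "\<bar>u z\<bar> = M" by auto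
  obtain x where "x < n" "u x \<noteq> 0" using \<open>\<exists>x<n. u x \<noteq> 0\<close> by blast
  then have "0 < M" using M_ge[of x] by simp
  have "\<bar>\<mu>\<bar> * (deg z * M) = \<bar>adj u z\<bar>"
    using eq[OF z(1)] z deg_nonneg[of z] by (simp add: abs_mult)
  also have "\<dots> \<le> adj (\<lambda>_. M) z"
    unfolding adj_def using M_ge by (intro order_trans[OF sum_abs] sum_mono) auto
  also have "\<dots> = 1 * (deg z * M)" by (simp add: adj_const)
  finally have "\<bar>\<mu>\<bar> \<le> 1"
    using deg_pos[OF z(1)] \<open>0 < M\<close> by (simp add: mult_le_cancel_right)
  then show ?thesis by simp
qed

lemma eigenfunction_deg_orth:
  fixes u :: "nat \<Rightarrow> real"
  assumes "\<And>x. x < n \<Longrightarrow> adj u x = \<mu> * deg x * u x" and "\<mu> \<noteq> 1"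
  shows "(\<Sum>x<n. deg x * u x) = 0"
proof -
  have "(\<Sum>x<n. deg x * u x) = (\<Sum>x<n. adj u x)" by (rule sum_adj[symmetric])
  also have "\<dots> = \<mu> * (\<Sum>x<n. deg x * u x)"
    using assms(1) by (simp add: sum_distrib_left mult.assoc)
  finally show ?thesis using assms(2) by (metis mult_cancel_right1)
qed

lemma cheeger_nonpos_if_closed:
  assumes X: "X \<subseteq> {0..<n}" "X \<noteq> {}" "X \<noteq> {0..<n}"
    and closed: "\<And>x y. x \<in> X \<Longrightarrow> y < n \<Longrightarrow> E x y \<Longrightarrow> y \<in> X"
  shows "cheeger n E \<le> 0"
proof -
  define Y where "Y = {0..<n} - X"
  have Y: "Y \<subseteq> {0..<n}" "Y \<noteq> {}" using X unfolding Y_def by auto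
  have closed_Y: "\<And>x y. x \<in> Y \<Longrightarrow> y < n \<Longrightarrow> E x y \<Longrightarrow> y \<in> Y"
    using closed edge_sym unfolding Y_def by auto
  have "stat_measure n E X + stat_measure n E Y = 1"
    unfolding Y_def using X(1) by (rule stat_measure_add_compl)
  then obtain Z where Z: "Z \<subseteq> {0..<n}" "Z \<noteq> {}" "stat_measure n E Z \<le> 1/2"
    and closed_Z: "\<And>x y. x \<in> Z \<Longrightarrow> y < n \<Longrightarrow> E x y \<Longrightarrow> y \<in> Z"
    using X closed Y closed_Y by (cases "stat_measure n E X \<le> 1/2") auto
  have "gboundary n E Z = {}" unfolding gboundary_def using closed_Z by auto
  then have "cheeger n E * real (gvol n E Z) \<le> 0" using cheeger_mult_gvol_le[OF Z] by simp
  then show ?thesis using gvol_pos[OF Z(1,2)] by (simp add: mult_le_0_iff)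
qed

(* The set where a harmonic function attains its maximum is closed under taking neighbours. *)
lemma harmonic_const:
  fixes u :: "nat \<Rightarrow> real"
  assumes "0 < cheeger n E" and harmonic: "\<And>x. x < n \<Longrightarrow> adj u x = deg x * u x" and "x < n"
  shows "u x = u 0"
proof -
  define M where "M = Max (u ` {..<n})"
  have M_ge: "\<And>x. x < n \<Longrightarrow> u x \<le> M" unfolding M_def by (intro Max_ge) auto
  have "M \<in> u ` {..<n}" unfolding M_def using n_pos by (intro Max_in) auto
  then obtain z where z: "z < n" "u z = M" by auto
  define S where "S = {x. x < n \<and> u x = M}"
  have closed: "b \<in> S" if ab: "a \<in> S" "b < n" "E a b" for a b
  proof -
    have a: "a < n" "u a = M" using ab(1) unfolding S_def by auto
    have "adj (\<lambda>y. M - u y) a = 0"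
      using harmonic[OF a(1)] a(2) by (simp add: adj_diff adj_const)
    moreover have "\<forall>y\<in>{..<n}. 0 \<le> (if E a y then M - u y else 0)" using M_ge by auto
    ultimately have "\<forall>y\<in>{..<n}. (if E a y then M - u y else 0) = 0"
      unfolding adj_def using sum_nonneg_eq_0_iff[of "{..<n}" "\<lambda>y. if E a y then M - u y else 0"]
      by simp
    then have "(if E a b then M - u b else 0) = 0" using ab(2) by blast
    then have "M - u b = 0" using ab(3) by simp
    then show ?thesis using ab(2) unfolding S_def by simp
  qed
  have "S = {0..<n}"
  proof (rule ccontr)
    assume "S \<noteq> {0..<n}"
    moreover have "S \<subseteq> {0..<n}" "S \<noteq> {}" using z unfolding S_def by auto
    ultimately have "cheeger n E \<le> 0" using cheeger_nonpos_if_closed closed by blast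
    then show False using assms(1) by simp
  qed
  then have "x \<in> S" "0 \<in> S" using \<open>x < n\<close> n_pos by auto
  then show ?thesis unfolding S_def by simp
qed

lemma char_matrix_walk_mult_vec:
  assumes v: "v \<in> carrier_vec n" and i: "i < n"
  shows "(char_matrix (walk_matrix n E) 1 *\<^sub>v v) $ i = adj (($) v) i / deg i - v $ i"
proof -
  have "(char_matrix (walk_matrix n E) 1 *\<^sub>v v) $ i
      = (\<Sum>j\<in>{0..<n}. (walk_matrix n E $$ (i, j) - (if i = j then 1 else 0)) * v $ j)"
    using v i walk_matrix_carrier
    by (auto simp: scalar_prod_def char_matrix_def intro!: sum.cong)
  also have "\<dots> = (\<Sum>j<n. (if E i j then v $ j else 0) / deg i) - (\<Sum>j<n. if i = j then v $ j else 0)"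
    unfolding sum_subtractf[symmetric] using i
    by (intro sum.cong) (auto simp: walk_matrix_index algebra_simps)
  finally show ?thesis using i by (simp add: adj_def sum_divide_distrib)
qed

lemma deg_sum_char_matrix_walk:
  assumes "v \<in> carrier_vec n"
  shows "(\<Sum>x<n. deg x * (char_matrix (walk_matrix n E) 1 *\<^sub>v v) $ x) = 0"
proof -
  have "(\<Sum>x<n. deg x * (char_matrix (walk_matrix n E) 1 *\<^sub>v v) $ x)
      = (\<Sum>x<n. adj (($) v) x - deg x * v $ x)"
  proof (intro sum.cong refl)
    fix x assume "x \<in> {..<n}"
    then have "deg x \<noteq> 0" using deg_pos by (metis lessThan_iff less_irrefl)
    then show "deg x * (char_matrix (walk_matrix n E) 1 *\<^sub>v v) $ x = adj (($) v) x - deg x * v $ x"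
      using \<open>x \<in> {..<n}\<close> by (simp add: char_matrix_walk_mult_vec[OF assms] right_diff_distrib)
  qed
  also have "\<dots> = 0" by (simp add: sum_subtractf sum_adj)
  finally show ?thesis .
qed

lemma walk_fixed_vector_const:
  fixes w :: "real Matrix.vec"
  assumes "0 < cheeger n E" and w: "w \<in> carrier_vec n"
    and fixed: "char_matrix (walk_matrix n E) 1 *\<^sub>v w = 0\<^sub>v n" and "x < n"
  shows "w $ x = w $ 0"
proof -
  have harmonic: "adj (($) w) y = deg y * w $ y" if y: "y < n" for y
  proof -
    have "adj (($) w) y / deg y = w $ y"
      using char_matrix_walk_mult_vec[OF w y] arg_cong[OF fixed, of "\<lambda>v. v $ y"] y
      by (simp del: index_mult_mat_vec)
    then show ?thesis using deg_pos[OF y] by (simp add: divide_eq_eq mult.commute)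
  qed
  show ?thesis by (rule harmonic_const[OF assms(1) harmonic \<open>x < n\<close>])
qed

(* (P - I) u is fixed by P, hence constant, and its degree-weighted sum vanishes; so it is 0
   and u itself is fixed. *)
lemma kernel_char_matrix_walk_sq:
  assumes pos: "0 < cheeger n E"
    and u: "u \<in> mat_kernel (char_matrix (walk_matrix n E) 1 ^\<^sub>m 2)"
  shows "\<exists>c. u = c \<cdot>\<^sub>v Matrix.vec n (\<lambda>_. 1)"
proof -
  define C where "C = char_matrix (walk_matrix n E) 1"
  have C: "C \<in> carrier_mat n n" unfolding C_def using walk_matrix_carrier by simp
  have "C ^\<^sub>m 2 \<in> carrier_mat n n" using C by simp
  then have u_carrier: "u \<in> carrier_vec n" and "C ^\<^sub>m 2 *\<^sub>v u = 0\<^sub>v n"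
    using mat_kernelD u unfolding C_def by blast+
  moreover have "C ^\<^sub>m 2 *\<^sub>v u = C *\<^sub>v (C *\<^sub>v u)"
    using C u_carrier by (simp add: numeral_2_eq_2 assoc_mult_mat_vec)
  ultimately have "C *\<^sub>v (C *\<^sub>v u) = 0\<^sub>v n" by simp
  define w where "w = C *\<^sub>v u"
  have w_carrier: "w \<in> carrier_vec n" unfolding w_def using C u_carrier by simp
  have w_const: "\<And>x. x < n \<Longrightarrow> w $ x = w $ 0"
    using walk_fixed_vector_const[OF pos w_carrier] \<open>C *\<^sub>v (C *\<^sub>v u) = 0\<^sub>v n\<close>
    unfolding w_def C_def by blast
  have "0 = (\<Sum>x<n. deg x * w $ x)"
    using deg_sum_char_matrix_walk[OF u_carrier] unfolding w_def C_def by simp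
  also have "\<dots> = w $ 0 * (\<Sum>x<n. deg x)"
    unfolding sum_distrib_left
  proof (intro sum.cong refl)
    fix x assume "x \<in> {..<n}"
    then show "deg x * w $ x = w $ 0 * deg x" using w_const[of x] by simp
  qed
  finally have "w $ 0 * (\<Sum>x<n. deg x) = 0" by simp
  moreover have "0 < (\<Sum>x<n. deg x)" using deg_pos n_pos by (intro sum_pos) auto
  ultimately have "w $ 0 = 0" by simp
  then have "\<And>x. x < n \<Longrightarrow> w $ x = 0" using w_const by metis
  then have "C *\<^sub>v u = 0\<^sub>v n"
    using w_carrier unfolding w_def[symmetric] by (intro eq_vecI) auto
  then have u_const: "u $ x = u $ 0" if "x < n" for x
    using walk_fixed_vector_const[OF pos u_carrier _ that] unfolding C_def by blast
  have "u = u $ 0 \<cdot>\<^sub>v Matrix.vec n (\<lambda>_. 1)"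
  proof (rule eq_vecI)
    fix i assume "i < dim_vec (u $ 0 \<cdot>\<^sub>v Matrix.vec n (\<lambda>_. 1))"
    then show "u $ i = (u $ 0 \<cdot>\<^sub>v Matrix.vec n (\<lambda>_. 1)) $ i" using u_const[of i] by simp
  qed (use u_carrier in simp)
  then show ?thesis by blast
qed

(* By the Jordan form, a multiple eigenvalue 1 would make the kernel of (P - I)^2 at least
   two-dimensional. *)
lemma count_proots_char_poly_walk_one_le:
  assumes "0 < cheeger n E"
  shows "count (proots (char_poly (walk_matrix n E))) 1 \<le> 1"
proof -
  let ?W = "walk_matrix n E"
  obtain rs where "char_poly ?W = (\<Prod>r\<leftarrow>rs. [:- r, 1:])" by (rule char_poly_walk_splits)
  then obtain nas where jnf: "jordan_nf ?W nas" using jordan_nf_exists[OF walk_matrix_carrier] by blast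
  let ?ms = "map fst [(m, e)\<leftarrow>nas. e = 1]"
  have count: "count (proots (char_poly ?W)) 1 = sum_list ?ms"
    unfolding jordan_nf_char_poly[OF jnf] by (rule count_proots_prod_linear_powers)
  have "min 2 (sum_list ?ms) \<le> sum_list (map (min 2) ?ms)" by (rule min_sum_list_le)
  also have "\<dots> = dim_gen_eigenspace ?W 1 2" by (simp add: dim_gen_eigenspace[OF jnf])
  finally have "min 2 (sum_list ?ms) \<le> dim_gen_eigenspace ?W 1 2" .
  moreover have "dim_gen_eigenspace ?W 1 2 \<le> 1"
    unfolding dim_gen_eigenspace_def
  proof (rule kernel_dim_le_1)
    show "char_matrix ?W 1 ^\<^sub>m 2 \<in> carrier_mat n n" using walk_matrix_carrier by simp
    have ones: "Matrix.vec n (\<lambda>_. 1 :: real) \<in> carrier_vec n" by simp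
    have "char_matrix ?W 1 *\<^sub>v Matrix.vec n (\<lambda>_. 1) = 0\<^sub>v n"
    proof (rule eq_vecI)
      fix i assume "i < dim_vec (0\<^sub>v n :: real Matrix.vec)"
      then have i: "i < n" by simp
      have "adj (($) (Matrix.vec n (\<lambda>_. 1 :: real))) i = adj (\<lambda>_. 1) i"
        unfolding adj_def by (intro sum.cong) auto
      then show "(char_matrix ?W 1 *\<^sub>v Matrix.vec n (\<lambda>_. 1)) $ i = 0\<^sub>v n $ i"
        unfolding char_matrix_walk_mult_vec[OF ones i] using deg_pos[OF i] i by (simp add: adj_const)
    qed (use char_matrix_closed[OF walk_matrix_carrier, of 1] in auto)
    moreover have C: "char_matrix ?W 1 \<in> carrier_mat n n" using walk_matrix_carrier by simp
    moreover have "char_matrix ?W 1 ^\<^sub>m 2 *\<^sub>v Matrix.vec n (\<lambda>_. 1)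
        = char_matrix ?W 1 *\<^sub>v (char_matrix ?W 1 *\<^sub>v Matrix.vec n (\<lambda>_. 1))"
      using C ones by (simp add: numeral_2_eq_2 assoc_mult_mat_vec)
    ultimately show "Matrix.vec n (\<lambda>_. 1) \<in> mat_kernel (char_matrix ?W 1 ^\<^sub>m 2)"
      using ones by (intro mat_kernelI[of _ n n]) auto
  qed (use kernel_char_matrix_walk_sq[OF assms] in blast)
  ultimately show ?thesis using count by simp
qed

lemma second_walk_eigenvalue_lt_1:
  assumes "0 < cheeger n E"
  shows "eigenvalues_desc (walk_matrix n E) ! 1 < 1"
proof -
  let ?L = "eigenvalues_desc (walk_matrix n E)"
  have len: "length ?L = n" and n2: "2 \<le> n" by (simp_all add: walk_eigenvalues two_le_n)
  have le_1: "?L ! 0 \<le> 1" "?L ! 1 \<le> 1"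
    using n2 walk_eigenvalues(4) walk_eigenvalue_le_1 by simp_all
  have "?L ! 1 \<le> ?L ! 0"
    using sorted_wrt_nth_less[OF walk_eigenvalues(3), of 0 1] len n2 by simp
  show ?thesis
  proof (rule ccontr)
    assume "\<not> ?thesis"
    then have "?L ! 0 = 1" "?L ! 1 = 1" using le_1 \<open>?L ! 1 \<le> ?L ! 0\<close> by linarith+
    then have "2 \<le> count (mset ?L) 1" using len n2 by (intro two_le_count_mset[of 0 _ 1]) auto
    then show False using count_proots_char_poly_walk_one_le[OF assms] walk_eigenvalues(2) by simp
  qed
qed

end

section \<open>Dense graphs\<close>

locale dense_graph = walk_graph +
  fixes \<delta> :: real
  assumes delta_pos: "0 < \<delta>"
    and gdeg_ge: "\<And>x. x < n \<Longrightarrow> \<delta> * real n \<le> real (gdeg n E x)"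
begin

lemma deg_ge: "x < n \<Longrightarrow> \<delta> * real n \<le> deg x"
  unfolding deg_def by (rule gdeg_ge)

lemma adj_sq_le:
  assumes "x < n"
  shows "(adj g x)\<^sup>2 \<le> sq_norm g * adj (\<lambda>y. if g y = 0 then 0 else 1 / deg y) x"
proof -
  let ?a = "\<lambda>y. if E x y \<and> g y \<noteq> 0 then sqrt (deg y) * g y else 0"
  let ?b = "\<lambda>y. if E x y \<and> g y \<noteq> 0 then 1 / sqrt (deg y) else 0"
  have "adj g x = (\<Sum>y<n. ?a y * ?b y)"
    unfolding adj_def using deg_nonneg deg_nonzero by (intro sum.cong refl) auto
  then have "(adj g x)\<^sup>2 \<le> (\<Sum>y<n. (?a y)\<^sup>2) * (\<Sum>y<n. (?b y)\<^sup>2)"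
    by (simp only: Cauchy_Schwarz_ineq_sum)
  also have "\<dots> \<le> sq_norm g * (\<Sum>y<n. (?b y)\<^sup>2)"
  proof (intro mult_right_mono sum_nonneg)
    show "(\<Sum>y<n. (?a y)\<^sup>2) \<le> sq_norm g"
      unfolding sq_norm_def using deg_nonneg by (intro sum_mono) (simp add: power_mult_distrib)
  qed simp
  also have "(\<Sum>y<n. (?b y)\<^sup>2) = adj (\<lambda>y. if g y = 0 then 0 else 1 / deg y) x"
    unfolding adj_def using deg_nonneg by (intro sum.cong refl) (simp add: power_divide)
  finally show ?thesis .
qed

lemma rayleigh_sq_le:
  assumes g: "0 < sq_norm g" and rayleigh: "\<theta> * sq_norm g \<le> edge_sum (\<lambda>x y. g x * g y)"
    and "0 < \<theta>"
  shows "\<theta>\<^sup>2 \<le> (\<Sum>x<n. adj (\<lambda>y. if g y = 0 then 0 else 1 / deg y) x / deg x)"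
proof -
  let ?w = "\<lambda>y. if g y = 0 then 0 else 1 / deg y"
  have "edge_sum (\<lambda>x y. g x * g y) = (\<Sum>x<n. (sqrt (deg x) * g x) * (adj g x / sqrt (deg x)))"
    unfolding edge_sum_eq_adj using deg_nonneg deg_nonzero by (intro sum.cong refl) auto
  then have "(edge_sum (\<lambda>x y. g x * g y))\<^sup>2
      \<le> (\<Sum>x<n. (sqrt (deg x) * g x)\<^sup>2) * (\<Sum>x<n. (adj g x / sqrt (deg x))\<^sup>2)"
    by (simp only: Cauchy_Schwarz_ineq_sum)
  also have "\<dots> = sq_norm g * (\<Sum>x<n. (adj g x)\<^sup>2 / deg x)"
    unfolding sq_norm_def using deg_nonneg by (simp add: power_mult_distrib power_divide)
  also have "\<dots> \<le> sq_norm g * (\<Sum>x<n. sq_norm g * adj ?w x / deg x)"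
    using adj_sq_le deg_nonneg sq_norm_nonneg
    by (intro mult_left_mono sum_mono divide_right_mono) auto
  also have "\<dots> = (sq_norm g)\<^sup>2 * (\<Sum>x<n. adj ?w x / deg x)"
    by (simp add: sum_distrib_left power2_eq_square mult.assoc)
  finally have "(\<theta> * sq_norm g)\<^sup>2 \<le> (sq_norm g)\<^sup>2 * (\<Sum>x<n. adj ?w x / deg x)"
    using rayleigh \<open>0 < \<theta>\<close> g by (smt (verit) power_mono mult_pos_pos)
  then show ?thesis using g by (simp add: power_mult_distrib mult.commute)
qed

(* The only use of the minimum degree: every vertex lies in the support of at most one g_i,
   and 1 / deg y <= 1 / (delta n). *)
lemma card_rayleigh_disjoint_le:
  fixes gs :: "nat \<Rightarrow> nat \<Rightarrow> real"
  assumes "finite I"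
    and disjoint: "\<And>i j x. i \<in> I \<Longrightarrow> j \<in> I \<Longrightarrow> i \<noteq> j \<Longrightarrow> x < n \<Longrightarrow> gs i x = 0 \<or> gs j x = 0"
    and pos: "\<And>i. i \<in> I \<Longrightarrow> 0 < sq_norm (gs i)"
    and rayleigh: "\<And>i. i \<in> I \<Longrightarrow> \<theta> * sq_norm (gs i) \<le> edge_sum (\<lambda>x y. gs i x * gs i y)"
    and "0 < \<theta>"
  shows "real (card I) * \<theta>\<^sup>2 \<le> 1 / \<delta>"
proof -
  let ?w = "\<lambda>i y. if gs i y = 0 then 0 else 1 / deg y"
  have w_sum: "(\<Sum>i\<in>I. ?w i y) \<le> 1 / (\<delta> * real n)" if "y < n" for y
  proof -
    have "card {i \<in> I. gs i y \<noteq> 0} \<le> Suc 0"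
      using disjoint \<open>y < n\<close> \<open>finite I\<close> by (subst card_le_Suc0_iff_eq) auto
    moreover have "(\<Sum>i\<in>I. ?w i y) = (\<Sum>i\<in>{i \<in> I. gs i y \<noteq> 0}. 1 / deg y)"
      using \<open>finite I\<close> by (intro sum.mono_neutral_cong_right) auto
    ultimately have "(\<Sum>i\<in>I. ?w i y) \<le> 1 / deg y"
      using divide_right_mono[of "real (card {i \<in> I. gs i y \<noteq> 0})" 1 "deg y"] deg_nonneg
      by simp
    also have "\<dots> \<le> 1 / (\<delta> * real n)"
      using deg_ge[OF that] deg_pos[OF that] delta_pos n_pos by (intro divide_left_mono) auto
    finally show ?thesis .
  qed
  have "real (card I) * \<theta>\<^sup>2 \<le> (\<Sum>i\<in>I. \<Sum>x<n. adj (?w i) x / deg x)"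
    using sum_mono[of I "\<lambda>_. \<theta>\<^sup>2"] rayleigh_sq_le[OF pos rayleigh \<open>0 < \<theta>\<close>] by (simp add: mult.commute)
  also have "\<dots> = (\<Sum>x<n. adj (\<lambda>y. \<Sum>i\<in>I. ?w i y) x / deg x)"
    by (subst sum.swap) (simp add: adj_sum sum_divide_distrib)
  also have "\<dots> \<le> (\<Sum>x<n. adj (\<lambda>_. 1 / (\<delta> * real n)) x / deg x)"
    using w_sum deg_nonneg by (intro sum_mono divide_right_mono adj_mono) auto
  also have "\<dots> = (\<Sum>x<n. 1 / (\<delta> * real n))"
    using deg_nonzero by (intro sum.cong refl) (simp add: adj_const)
  also have "\<dots> = 1 / \<delta>" using n_pos by simp
  finally show ?thesis .
qed

(* A tent b with energy at most C = ||b||^2 has <b, A b> >= ||b||^2 / 2, so there are at most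
   4 / delta of them; the energies of all tents add up to at most 2 Q(f). *)
lemma card_tents_le:
  fixes f ts :: "nat \<Rightarrow> real"
  assumes inc: "\<forall>i<N. ts i < ts (Suc i)"
    and mass: "\<And>i. i < N \<Longrightarrow> sq_norm (\<lambda>x. tent (ts i) (ts (Suc i)) (f x)) = C" and "0 < C"
  shows "real N \<le> 4 / \<delta> + 2 * dirichlet f / C"
proof -
  define b where "b i x = tent (ts i) (ts (Suc i)) (f x)" for i x
  define B where "B = {i. i < N \<and> C < dirichlet (b i)}"
  define G where "G = {i. i < N \<and> dirichlet (b i) \<le> C}"
  have "(\<Sum>i<N. dirichlet (b i)) = edge_sum (\<lambda>x y. \<Sum>i<N. (b i x - b i y)\<^sup>2)"
    unfolding dirichlet_def by (simp add: edge_sum_sum)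
  also have "\<dots> \<le> edge_sum (\<lambda>x y. 2 * (f x - f y)\<^sup>2)"
    unfolding b_def using sum_sq_tent_diff_le[OF inc] by (intro edge_sum_mono)
  finally have sum_dir: "(\<Sum>i<N. dirichlet (b i)) \<le> 2 * dirichlet f"
    unfolding dirichlet_def edge_sum_cmult .
  have "real (card B) * C \<le> (\<Sum>i\<in>B. dirichlet (b i))"
    using sum_mono[of B "\<lambda>_. C" "\<lambda>i. dirichlet (b i)"] unfolding B_def by auto
  also have "\<dots> \<le> (\<Sum>i<N. dirichlet (b i))"
    unfolding B_def by (intro sum_mono2) (auto simp: dirichlet_nonneg)
  finally have B_le: "real (card B) \<le> 2 * dirichlet f / C"
    using sum_dir \<open>0 < C\<close> by (simp add: field_simps)
  have "real (card G) * (1 / 2)\<^sup>2 \<le> 1 / \<delta>"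
  proof (rule card_rayleigh_disjoint_le[where gs = b])
    show "\<And>i j x. i \<in> G \<Longrightarrow> j \<in> G \<Longrightarrow> i \<noteq> j \<Longrightarrow> x < n \<Longrightarrow> b i x = 0 \<or> b j x = 0"
      unfolding G_def b_def using tents_disjoint[OF inc] by blast
    show "\<And>i. i \<in> G \<Longrightarrow> 0 < sq_norm (b i)"
      using mass \<open>0 < C\<close> unfolding G_def b_def by simp
    show "\<And>i. i \<in> G \<Longrightarrow> 1 / 2 * sq_norm (b i) \<le> edge_sum (\<lambda>x y. b i x * b i y)"
      using mass dirichlet_eq unfolding G_def b_def by fastforce
  qed (auto simp: G_def)
  then have G_le: "real (card G) \<le> 4 / \<delta>" by (simp add: field_simps power2_eq_square)
  have "G \<union> B = {..<N}" "G \<inter> B = {}" "finite G" "finite B" unfolding G_def B_def by auto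
  then have "card G + card B = N" by (metis card_Un_disjoint card_lessThan)
  then show ?thesis using B_le G_le by linarith
qed

lemma exists_levels:
  fixes f :: "nat \<Rightarrow> real" and k :: nat
  assumes f_nonneg: "\<And>x. x < n \<Longrightarrow> 0 \<le> f x" and f_pos: "0 < sq_norm f"
    and dir: "dirichlet f \<le> \<gamma> * sq_norm f" and "0 < \<gamma>" and k: "4 / \<delta> < real k"
  obtains T where "finite T" "T \<noteq> {}" "card T \<le> 2 * k + 1"
    "(\<Sum>x<n. deg x * (infdist (f x) T)\<^sup>2) \<le> 4 * \<gamma> * sq_norm f"
proof -
  have "0 < k" using k delta_pos by (metis divide_pos_pos of_nat_0_less_iff order.strict_trans zero_less_numeral)
  define C where "C = 2 * \<gamma> * sq_norm f / real k"
  have "0 < C" unfolding C_def using \<open>0 < \<gamma>\<close> f_pos \<open>0 < k\<close> by simp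
  define M where "M = Max (insert 0 (f ` {..<n}))"
  have "0 \<le> M" and f_le_M: "\<And>x. x < n \<Longrightarrow> f x \<le> M" unfolding M_def by auto
  define e where "e s t = sq_norm (\<lambda>x. tent s t (f x))" for s t
  have "\<And>s. continuous_on UNIV (e s)"
    unfolding e_def sq_norm_def tent_def by (intro continuous_intros)
  moreover have "\<And>s. e s s = 0" unfolding e_def sq_norm_def by simp
  ultimately obtain j ts where j: "j \<le> 2 * k" "ts 0 = 0" "ts j \<le> M"
    and chain: "\<forall>i<j. ts i < ts (Suc i) \<and> e (ts i) (ts (Suc i)) = C"
    and stop: "j < 2 * k \<longrightarrow> e (ts j) M \<le> C"
    using greedy_chain[of e C M "2 * k"] \<open>0 < C\<close> \<open>0 \<le> M\<close> by blast
  have "j < 2 * k"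
  proof (rule ccontr)
    assume "\<not> j < 2 * k"
    then have "real (2 * k) \<le> 4 / \<delta> + 2 * dirichlet f / C"
      using chain j(1) \<open>0 < C\<close> by (intro card_tents_le[where ts = ts]) (auto simp: e_def)
    also have "2 * dirichlet f / C \<le> real k"
      using dir \<open>0 < \<gamma>\<close> f_pos \<open>0 < k\<close> unfolding C_def by (simp add: field_simps)
    finally show False using k by simp
  qed
  define T where "T = insert M (ts ` {..j})"
  have "card T \<le> Suc (card (ts ` {..j}))" unfolding T_def by (rule card_insert_le_m1) auto
  also have "\<dots> \<le> 2 * k + 1" using card_image_le[of "{..j}" ts] \<open>j < 2 * k\<close> by simp
  finally have card_T: "card T \<le> 2 * k + 1" .
  have "(\<Sum>x<n. deg x * (infdist (f x) T)\<^sup>2) \<le> (\<Sum>i<j. e (ts i) (ts (Suc i))) + e (ts j) M"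
    unfolding T_def e_def using f_nonneg f_le_M j(2) by (intro sum_deg_infdist_chain_le) auto
  also have "\<dots> = real j * C + e (ts j) M" using chain by simp
  also have "\<dots> \<le> (real j + 1) * C" using stop \<open>j < 2 * k\<close> by (simp add: algebra_simps)
  also have "\<dots> \<le> real (2 * k) * C"
    using \<open>j < 2 * k\<close> \<open>0 < C\<close> by (intro mult_right_mono) linarith+
  also have "\<dots> = 4 * \<gamma> * sq_norm f" unfolding C_def using \<open>0 < k\<close> by simp
  finally show ?thesis using that[of T] card_T unfolding T_def by simp
qed

(* h = int_0^f dist(s, T) ds is comparable to f^2 because T is small, while its increments
   along edges are controlled by Q(f) and by the distance of f to T. *)
lemma cheeger_le_rayleigh:
  fixes f :: "nat \<Rightarrow> real" and k :: nat
  assumes f_nonneg: "\<And>x. x < n \<Longrightarrow> 0 \<le> f x" and f_pos: "0 < sq_norm f"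
    and dir: "dirichlet f \<le> \<gamma> * sq_norm f" and "0 < \<gamma>" and k: "4 / \<delta> < real k"
    and small: "stat_measure n E {x. x < n \<and> 0 < f x} \<le> 1/2"
  shows "cheeger n E \<le> 48 * real (k + 1) * \<gamma>"
proof -
  obtain T where T: "finite T" "T \<noteq> {}" "card T \<le> 2 * k + 1"
    and dist: "(\<Sum>x<n. deg x * (infdist (f x) T)\<^sup>2) \<le> 4 * \<gamma> * sq_norm f"
    using exists_levels[OF f_nonneg f_pos dir \<open>0 < \<gamma>\<close> k] by blast
  define h where "h x = integral {0..f x} (\<lambda>s. infdist s T)" for x
  have h_nonneg: "\<And>x. x < n \<Longrightarrow> 0 \<le> h x" unfolding h_def by (rule integral_infdist_nonneg)
  have "cheeger n E * (\<Sum>x<n. deg x * h x)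
      \<le> 2 * dirichlet f + 1/4 * (\<Sum>x<n. deg x * (infdist (f x) T)\<^sup>2)"
    unfolding h_def using f_nonneg small by (rule cheeger_integral_infdist_le)
  also have "\<dots> \<le> 3 * \<gamma> * sq_norm f" using dir dist by simp
  finally have upper: "cheeger n E * (\<Sum>x<n. deg x * h x) \<le> 3 * \<gamma> * sq_norm f" .
  have "(f x)\<^sup>2 \<le> 16 * real (k + 1) * h x" if "x < n" for x
  proof -
    have "(f x)\<^sup>2 \<le> 8 * (real (card T) + 1) * h x"
      unfolding h_def using sq_le_integral_infdist T(1,2) f_nonneg[OF that] by simp
    also have "\<dots> \<le> 16 * real (k + 1) * h x"
      using T(3) h_nonneg[OF that] by (intro mult_right_mono) auto
    finally show ?thesis .
  qed
  then have lower: "sq_norm f \<le> 16 * real (k + 1) * (\<Sum>x<n. deg x * h x)"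
    unfolding sq_norm_def sum_distrib_left using deg_nonneg
    by (intro sum_mono) (simp add: mult.left_commute mult_left_mono)
  show ?thesis
  proof (cases "cheeger n E \<le> 0")
    case False
    then have "cheeger n E * sq_norm f \<le> cheeger n E * (16 * real (k + 1) * (\<Sum>x<n. deg x * h x))"
      using lower by (intro mult_left_mono) auto
    also have "\<dots> = 16 * real (k + 1) * (cheeger n E * (\<Sum>x<n. deg x * h x))"
      by (simp only: ac_simps)
    also have "\<dots> \<le> 16 * real (k + 1) * (3 * \<gamma> * sq_norm f)"
      using upper by (intro mult_left_mono) auto
    also have "\<dots> = (48 * real (k + 1) * \<gamma>) * sq_norm f" by (simp add: algebra_simps)
    finally have "cheeger n E * sq_norm f \<le> (48 * real (k + 1) * \<gamma>) * sq_norm f" .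
    then show ?thesis using f_pos by simp
  next
    case True
    moreover have "0 \<le> 48 * real (k + 1) * \<gamma>" using \<open>0 < \<gamma>\<close> by simp
    ultimately show ?thesis by linarith
  qed
qed

lemma cheeger_le_eigenvalue_gap:
  fixes v :: "nat \<Rightarrow> real" and k :: nat
  assumes "\<And>x. x < n \<Longrightarrow> adj v x = \<mu> * deg x * v x" and "\<mu> < 1"
    and "(\<Sum>x<n. deg x * v x) = 0" and "0 < sq_norm v" and "4 / \<delta> < real k"
  shows "cheeger n E \<le> 96 * real (k + 1) * (1 - \<mu>)"
proof -
  obtain f where "\<And>x. x < n \<Longrightarrow> 0 \<le> f x" "0 < sq_norm f"
    "dirichlet f \<le> 2 * (1 - \<mu>) * sq_norm f" "stat_measure n E {x. x < n \<and> 0 < f x} \<le> 1/2"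
    using nonneg_part_rayleigh[OF assms(1-4)] by blast
  from cheeger_le_rayleigh[OF this(1-3) _ assms(5) this(4)] \<open>\<mu> < 1\<close>
  have "cheeger n E \<le> 48 * real (k + 1) * (2 * (1 - \<mu>))" by simp
  then show ?thesis by (simp add: algebra_simps)
qed

lemma cheeger_le_spectral_gap:
  assumes "4 / \<delta> < real k"
  shows "cheeger n E \<le> 96 * real (k + 1) * spectral_gap n E"
proof -
  let ?\<mu> = "eigenvalues_desc (walk_matrix n E) ! 1"
  have gap: "spectral_gap n E = 1 - ?\<mu>" unfolding spectral_gap_def ..
  have "eigenvalue (walk_matrix n E) ?\<mu>" using walk_eigenvalues(4) two_le_n by simp
  then obtain u where eigen: "\<And>x. x < n \<Longrightarrow> adj u x = ?\<mu> * deg x * u x"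
    and nonzero: "\<exists>x<n. u x \<noteq> 0" using walk_eigenvalue_real_eigenfunction by blast
  show ?thesis
  proof (cases "0 < cheeger n E")
    case True
    then have "?\<mu> < 1" by (rule second_walk_eigenvalue_lt_1)
    moreover have "0 < sq_norm u" using nonzero sq_norm_pos by blast
    ultimately show ?thesis
      using cheeger_le_eigenvalue_gap[OF eigen _ eigenfunction_deg_orth[OF eigen] _ assms] gap by simp
  next
    case False
    have "?\<mu> \<le> 1" using \<open>eigenvalue _ ?\<mu>\<close> by (rule walk_eigenvalue_le_1)
    then have "0 \<le> 96 * real (k + 1) * spectral_gap n E" unfolding gap by simp
    then show ?thesis using False by linarith
  qed
qed

end

theorem theorem1p2:
  fixes \<delta> :: real
  assumes "0 < \<delta>" and "\<delta> < 1"
  shows "\<exists>c>0. \<forall>n E. simple_graph n E \<and> n \<ge> 1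
           \<and> (\<forall>v<n. real (gdeg n E v) \<ge> \<delta> * real n)
           \<longrightarrow> spectral_gap n E \<ge> c * cheeger n E"
proof (intro exI[of _ "1 / (96 * real (nat \<lceil>4 / \<delta>\<rceil> + 2))"] conjI allI impI)
  define k where "k = nat \<lceil>4 / \<delta>\<rceil> + 1"
  have k: "4 / \<delta> < real k" unfolding k_def by linarith
  fix n E
  assume H: "simple_graph n E \<and> n \<ge> 1 \<and> (\<forall>v<n. real (gdeg n E v) \<ge> \<delta> * real n)"
  have deg_ge: "\<And>x. x < n \<Longrightarrow> \<delta> * real n \<le> real (gdeg n E x)" using H by blast
  have "0 < \<delta> * real n" using H \<open>0 < \<delta>\<close> by simp
  then have "\<And>x. x < n \<Longrightarrow> 0 < gdeg n E x" using deg_ge by (metis of_nat_0_less_iff order_less_le_trans)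
  then interpret dense_graph n E \<delta>
    using H deg_ge \<open>0 < \<delta>\<close> by unfold_locales auto
  have "cheeger n E \<le> 96 * real (k + 1) * spectral_gap n E"
    using cheeger_le_spectral_gap[OF k] .
  then show "1 / (96 * real (nat \<lceil>4 / \<delta>\<rceil> + 2)) * cheeger n E \<le> spectral_gap n E"
    unfolding k_def by (simp add: field_simps)
qed simp

end
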